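(* Let $b\ge2$, $m\ge3$. For $x\ge0$ and $n\in\mathbb{N}$ define $F_n^{(x)}:\mathbb{R}^{m-2}\to\mathbb{R}^{m-2}$ by $F_n^{(x)}(\mathbf{y})=\vec P_m\big(M_b^{-n}(x),\mathbf{y}\big)$. Then: (i) There is $\epsilon>0$ such that for all $x\ge0$ and all $\mathbf{y}$ with $\|\mathbf{y}\|_\infty\le\epsilon$ the limit $$\lim_{n\to\infty}F_1^{(x)}\circ\cdots\circ F_n^{(x)}(\mathbf{y})=\big(H_3(x),\dots,H_m(x)\big)=:\vec H_m(x)$$ exists and is independent of $\mathbf{y}$; the convergence is uniform over $\|\mathbf{y}\|_\infty\le\epsilon$ and $x$ in any bounded subset of $[0,\infty)$. (ii) $H_m$ is nonnegative and increasing on $[0,\infty)$, $H_m(0)=0$, and $H_m(x)\to\infty$ as $x\to\infty$. (iii) $\vec H_m(M_b(x))=\vec P_m\big(x,\vec H_m(x)\big)$ for all $x\ge0$. (iv) $\vec H_m$ is differentiable and $$\frac{d}{dx}\vec H_m(x)=\sum_{k=1}^\infty\Big(\prod_{j=1}^{k-1}(\widetilde{\mathbf D}\vec P_m)\big(M_b^{-j}(x),\vec H_m(M_b^{-j}(x))\big)\Big)(\partial_1\vec P_m)\big(M_b^{-k}(x),\vec H_m(M_b^{-k}(x))\big)\frac{d}{dx}M_b^{-k}(x),$$ where $\prod_{j=1}^{n}A_j$ means $A_1A_2\cdots A_n$; the series converges uniformly for $x$ in bounded subsets of $[0,\infty)$. (v) With $\epsilon$ as in (i), $\lim_{n\to\infty}\frac{d}{dx}F_1^{(x)}\circ\cdots\circ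 F_n^{(x)}(\mathbf{y})=\frac{d}{dx}\vec H_m(x)$ uniformly over $\|\mathbf{y}\|_\infty\le\epsilon$ and $x$ in any bounded subset of $[0,\infty)$.
   Context: $M_b(x)=\frac1b[(1+x)^b-1]$ is an increasing bijection of $[0,\infty)$; $M_b^{-1}$ is its inverse and $M_b^{-n}$ the $n$-fold composition of $M_b^{-1}$. For $k\ge2$, $P_k(y_2,\dots,y_k)$ is the polynomial defined as follows: for i.i.d. mean-zero random variables $R_{i,j}$ ($1\le i,j\le b$) with moments $\mu_\ell=\mathbb{E}[R_{i,j}^\ell]$, expanding $\mathbb{E}\big[\big(\frac1b\sum_{i=1}^b(\prod_{j=1}^b(1+R_{i,j})-1)\big)^k\big]$ gives a polynomial in $\mu_2,\dots,\mu_k$, and $P_k$ is this polynomial with $\mu_\ell$ replaced by $y_\ell$. For $x\in\mathbb{R}$ and $\mathbf{y}=(y_3,\dots,y_m)$, set $\vec P_m(x,\mathbf{y})=\big(P_3(x,y_3),P_4(x,y_3,y_4),\dots,P_m(x,y_3,\dots,y_m)\big)$ (i.e. $P_k$ evaluated with $y_2=x$). $(\widetilde{\mathbf D}\vec P_m)(x,\mathbf{y})$ is the $(m-2)\times(m-2)$ matrix with entries $\frac{\partial}{\partial y_j}P_i(x,\mathbf{y})$, $i,j\in\{3,\dots,m\}$, and $(\partial_1\vec P_m)(x,\mathbf{y})$ is the vector of partial derivatives with respect to $x$. $\|\mathbf{y}\|_\infty=\max_i|y_i|$. *)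

theory Defs
  imports "HOL-Analysis.Analysis"
begin

definition Mb :: "nat \<Rightarrow> real \<Rightarrow> real" where
  "Mb b x = ((1 + x) ^ b - 1) / real b"

text \<open>The inverse of M_b on [0,inf), written out: M_b^{-1}(y) = (1 + b y)^(1/b) - 1
  (smooth for y > -1/b, so two-sided derivatives at 0 make sense).\<close>
definition Mb_inv :: "nat \<Rightarrow> real \<Rightarrow> real" where
  "Mb_inv b y = (1 + real b * y) powr (1 / real b) - 1"

definition Mb_inv_pow :: "nat \<Rightarrow> nat \<Rightarrow> real \<Rightarrow> real" where
  "Mb_inv_pow b n = (Mb_inv b ^^ n)"

text \<open>Moments: mu_0 = 1, mu_1 = 0 (mean zero), mu_l = y l for l \<ge> 2.\<close>
definition mom :: "(nat \<Rightarrow> real) \<Rightarrow> nat \<Rightarrow> real" where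
  "mom y l = (if l = 0 then 1 else if l = 1 then 0 else y l)"

text \<open>P_k(y_2,...,y_k): full expansion of
  E[((1/b) sum_i (prod_j (1+R_ij) - 1))^k] for i.i.d. mean-zero R_ij with moments y_l.
  Using prod_j(1+R_ij) - 1 = sum over nonempty S of prod_{j in S} R_ij, the k-th power
  expands as a sum over row choices r : [k] -> [b] and nonempty column sets S : [k] -> P([b]);
  by independence the expectation of each term is prod_{(a,c)} mu_{#{t. r t = a, c in S t}}.\<close>
definition P :: "nat \<Rightarrow> nat \<Rightarrow> (nat \<Rightarrow> real) \<Rightarrow> real" where
  "P b k y = (1 / real b ^ k) *
     (\<Sum>r \<in> {..<k} \<rightarrow>\<^sub>E {..<b}. \<Sum>S \<in> {..<k} \<rightarrow>\<^sub>E (Pow {..<b} - {{}}).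
        \<Prod>a\<in>{..<b}. \<Prod>c\<in>{..<b}. mom y (card {t\<in>{..<k}. r t = a \<and> c \<in> S t}))"

text \<open>Vectors y = (y_3,...,y_m) are functions nat => real; only indices 3..m are relevant.
  vec P_m(x,y): component k (3 \<le> k \<le> m) is P_k with y_2 := x; other components 0.\<close>
definition Pvec :: "nat \<Rightarrow> nat \<Rightarrow> real \<Rightarrow> (nat \<Rightarrow> real) \<Rightarrow> (nat \<Rightarrow> real)" where
  "Pvec b m x y = (\<lambda>i. if 3 \<le> i \<and> i \<le> m then P b i (y(2 := x)) else 0)"

definition Fmap :: "nat \<Rightarrow> nat \<Rightarrow> real \<Rightarrow> nat \<Rightarrow> (nat \<Rightarrow> real) \<Rightarrow> (nat \<Rightarrow> real)" where
  "Fmap b m x n y = Pvec b m (Mb_inv_pow b n x) y"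

definition Fcomp :: "nat \<Rightarrow> nat \<Rightarrow> real \<Rightarrow> nat \<Rightarrow> (nat \<Rightarrow> real) \<Rightarrow> (nat \<Rightarrow> real)" where
  "Fcomp b m x n y = foldr (\<lambda>k w. Fmap b m x k w) [1..<Suc n] y"

definition DP :: "nat \<Rightarrow> nat \<Rightarrow> real \<Rightarrow> (nat \<Rightarrow> real) \<Rightarrow> nat \<Rightarrow> nat \<Rightarrow> real" where
  "DP b m x y i j = deriv (\<lambda>t. Pvec b m x (y(j := t)) i) (y j)"

definition d1P :: "nat \<Rightarrow> nat \<Rightarrow> real \<Rightarrow> (nat \<Rightarrow> real) \<Rightarrow> nat \<Rightarrow> real" where
  "d1P b m x y i = deriv (\<lambda>t. Pvec b m t y i) x"

definition matvec :: "nat \<Rightarrow> (nat \<Rightarrow> nat \<Rightarrow> real) \<Rightarrow> (nat \<Rightarrow> real) \<Rightarrow> (nat \<Rightarrow> real)" where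
  "matvec m A v = (\<lambda>i. \<Sum>j\<in>{3..m}. A i j * v j)"

definition series_term :: "nat \<Rightarrow> nat \<Rightarrow> (real \<Rightarrow> nat \<Rightarrow> real) \<Rightarrow> nat \<Rightarrow> real \<Rightarrow> nat \<Rightarrow> real" where
  "series_term b m H k x =
     (\<lambda>i. foldr (\<lambda>j w. matvec m (DP b m (Mb_inv_pow b j x) (H (Mb_inv_pow b j x))) w) [1..<k]
            (d1P b m (Mb_inv_pow b k x) (H (Mb_inv_pow b k x))) i
          * deriv (Mb_inv_pow b k) x)"

end

theory Submission
  imports Defs
begin

text \<open>
  The derivative of \<open>P\<^sub>i\<close> in \<open>y\<^sub>j\<close> at the origin is \<open>b\<^sup>2\<^sup>-\<^sup>i\<close> if \<open>i = j\<close> and \<open>0\<close> otherwise: the only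
  terms linear in \<open>y\<^sub>j\<close> put all \<open>i\<close> draws into a single row and a single column.  Hence the
  Jacobian of \<open>P\<^sub>m(s, \<cdot>)\<close> has row sums \<open>\<le> 3/4\<close> on a small box \<open>|s|, \<parallel>y\<parallel>\<^sub>\<infinity> \<le> \<epsilon>\<close>, and for
  \<open>s \<le> \<delta>\<close> the map \<open>P\<^sub>m(s, \<cdot>)\<close> is a \<open>3/4\<close>-contraction of the \<open>\<epsilon>\<close>-box into itself.  Since
  \<open>M\<^sub>b\<^sup>-\<^sup>n(x) \<rightarrow> 0\<close> uniformly on bounded sets, all but boundedly many of the maps \<open>F\<^sub>n\<^sup>(\<^sup>x\<^sup>)\<close>
  contract, so \<open>F\<^sub>1 \<circ> \<dots> \<circ> F\<^sub>n(y)\<close> is uniformly Cauchy with a limit \<open>H(x)\<close> independent of \<open>y\<close>,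
  and (iii) follows by continuity of the polynomials.  Nonnegativity and monotonicity are
  inherited from the nonnegative coefficients of \<open>P\<close>, and \<open>H\<^sub>l(M\<^sub>b(x)) \<ge> x H\<^sub>l\<^sub>-\<^sub>2(x) / b\<^sup>l\<close>
  forces \<open>H\<^sub>m \<rightarrow> \<infinity>\<close>.  By the chain rule the derivative of the composition is a finite sum of
  products of Jacobians; the same contraction makes these terms decay geometrically, uniformly
  in \<open>n\<close>, so they converge termwise to the series in (iv), and termwise differentiation of the
  uniformly convergent compositions gives the derivative of \<open>H\<close>.
\<close>

section \<open>Polynomial functions of finitely many coordinates\<close>

inductive polyfun :: "nat set \<Rightarrow> ((nat \<Rightarrow> real) \<Rightarrow> real) \<Rightarrow> bool" for V where
  polyfun_const: "polyfun V (\<lambda>z. c)"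
| polyfun_coord: "l \<in> V \<Longrightarrow> polyfun V (\<lambda>z. z l)"
| polyfun_add: "polyfun V f \<Longrightarrow> polyfun V g \<Longrightarrow> polyfun V (\<lambda>z. f z + g z)"
| polyfun_mult: "polyfun V f \<Longrightarrow> polyfun V g \<Longrightarrow> polyfun V (\<lambda>z. f z * g z)"

lemma polyfun_sum:
  "finite A \<Longrightarrow> (\<And>a. a \<in> A \<Longrightarrow> polyfun V (f a)) \<Longrightarrow> polyfun V (\<lambda>z. \<Sum>a\<in>A. f a z)"
  by (induction A rule: finite_induct) (simp_all add: polyfun_add polyfun_const[of V 0])

lemma polyfun_prod:
  "finite A \<Longrightarrow> (\<And>a. a \<in> A \<Longrightarrow> polyfun V (f a)) \<Longrightarrow> polyfun V (\<lambda>z. \<Prod>a\<in>A. f a z)"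
  by (induction A rule: finite_induct) (simp_all add: polyfun_mult polyfun_const[of V 1])

lemma polyfun_tendsto:
  assumes "polyfun V f" "\<And>l. l \<in> V \<Longrightarrow> ((\<lambda>n. Z n l) \<longlongrightarrow> z l) F"
  shows "((\<lambda>n. f (Z n)) \<longlongrightarrow> f z) F"
  using assms by (induction rule: polyfun.induct) (auto intro!: tendsto_intros)

definition box_lipschitz :: "nat set \<Rightarrow> real \<Rightarrow> real \<Rightarrow> real \<Rightarrow> ((nat \<Rightarrow> real) \<Rightarrow> real) \<Rightarrow> bool"
  where "box_lipschitz V K C L f \<longleftrightarrow>
    (\<forall>z z' d. (\<forall>l\<in>V. \<bar>z l\<bar> \<le> K) \<longrightarrow> (\<forall>l\<in>V. \<bar>z' l\<bar> \<le> K) \<longrightarrow> (\<forall>l\<in>V. \<bar>z l - z' l\<bar> \<le> d) \<longrightarrow>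
       \<bar>f z\<bar> \<le> C \<and> \<bar>f z - f z'\<bar> \<le> L * d)"

lemma box_lipschitzD:
  "box_lipschitz V K C L f \<Longrightarrow> (\<forall>l\<in>V. \<bar>z l\<bar> \<le> K) \<Longrightarrow> (\<forall>l\<in>V. \<bar>z' l\<bar> \<le> K) \<Longrightarrow>
    (\<forall>l\<in>V. \<bar>z l - z' l\<bar> \<le> d) \<Longrightarrow> \<bar>f z\<bar> \<le> C \<and> \<bar>f z - f z'\<bar> \<le> L * d"
  unfolding box_lipschitz_def by blast

lemma box_lipschitz_mono:
  assumes "box_lipschitz V K C L f" "V \<noteq> {}" "C \<le> C'" "L \<le> L'"
  shows "box_lipschitz V K C' L' f"
  unfolding box_lipschitz_def
proof (intro allI impI)
  fix z z' d assume z: "\<forall>l\<in>V. \<bar>z l\<bar> \<le> K" "\<forall>l\<in>V. \<bar>z' l\<bar> \<le> K" "\<forall>l\<in>V. \<bar>z l - z' l\<bar> \<le> d"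
  have "0 \<le> d" using z(3) \<open>V \<noteq> {}\<close> by (meson abs_ge_zero all_not_in_conv order_trans)
  then show "\<bar>f z\<bar> \<le> C' \<and> \<bar>f z - f z'\<bar> \<le> L' * d"
    using box_lipschitzD[OF assms(1) z] assms(3,4) by (smt (verit) mult_right_mono)
qed

lemma box_lipschitz_add:
  assumes "box_lipschitz V K C1 L1 f" "box_lipschitz V K C2 L2 g"
  shows "box_lipschitz V K (C1 + C2) (L1 + L2) (\<lambda>z. f z + g z)"
  unfolding box_lipschitz_def
proof (intro allI impI)
  fix z z' d assume z: "\<forall>l\<in>V. \<bar>z l\<bar> \<le> K" "\<forall>l\<in>V. \<bar>z' l\<bar> \<le> K" "\<forall>l\<in>V. \<bar>z l - z' l\<bar> \<le> d"
  show "\<bar>f z + g z\<bar> \<le> C1 + C2 \<and> \<bar>f z + g z - (f z' + g z')\<bar> \<le> (L1 + L2) * d"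
    using box_lipschitzD[OF assms(1) z] box_lipschitzD[OF assms(2) z]
    by (auto simp: algebra_simps intro: order_trans[OF abs_triangle_ineq] add_mono)
qed

lemma box_lipschitz_mult:
  assumes f: "box_lipschitz V K C1 L1 f" and g: "box_lipschitz V K C2 L2 g" and "0 \<le> C1"
  shows "box_lipschitz V K (C1 * C2) (C1 * L2 + C2 * L1) (\<lambda>z. f z * g z)"
  unfolding box_lipschitz_def
proof (intro allI impI conjI)
  fix z z' d assume z: "\<forall>l\<in>V. \<bar>z l\<bar> \<le> K" "\<forall>l\<in>V. \<bar>z' l\<bar> \<le> K" "\<forall>l\<in>V. \<bar>z l - z' l\<bar> \<le> d"
  have z': "\<forall>l\<in>V. \<bar>z' l - z l\<bar> \<le> d" using z(3) by (simp add: abs_minus_commute)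
  note f1 = box_lipschitzD[OF f z] and g1 = box_lipschitzD[OF g z]
  have g2: "\<bar>g z'\<bar> \<le> C2" using box_lipschitzD[OF g z(2,1) z'] by blast
  then have "0 \<le> C2" using abs_ge_zero[of "g z'"] by linarith
  show "\<bar>f z * g z\<bar> \<le> C1 * C2"
    using f1 g1 \<open>0 \<le> C1\<close> unfolding abs_mult by (intro mult_mono) auto
  have "\<bar>f z * g z - f z' * g z'\<bar> = \<bar>f z * (g z - g z') + g z' * (f z - f z')\<bar>"
    by (simp add: algebra_simps)
  also have "\<dots> \<le> \<bar>f z\<bar> * \<bar>g z - g z'\<bar> + \<bar>g z'\<bar> * \<bar>f z - f z'\<bar>"
    by (metis abs_mult abs_triangle_ineq)
  also have "\<dots> \<le> C1 * (L2 * d) + C2 * (L1 * d)"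
    using f1 g1 g2 \<open>0 \<le> C1\<close> \<open>0 \<le> C2\<close> by (intro add_mono mult_mono) auto
  finally show "\<bar>f z * g z - f z' * g z'\<bar> \<le> (C1 * L2 + C2 * L1) * d"
    by (simp add: algebra_simps)
qed

lemma polyfun_box_lipschitz:
  assumes "polyfun V f"
  shows "\<exists>C L. 0 \<le> C \<and> 0 \<le> L \<and> box_lipschitz V K C L f"
  using assms
proof (induction rule: polyfun.induct)
  case (polyfun_const c)
  show ?case by (intro exI[of _ "\<bar>c\<bar>"] exI[of _ 0]) (auto simp: box_lipschitz_def)
next
  case (polyfun_coord l)
  have "box_lipschitz V K \<bar>K\<bar> 1 (\<lambda>z. z l)"
    unfolding box_lipschitz_def
  proof (intro allI impI)
    fix z z' d assume "\<forall>l\<in>V. \<bar>z l\<bar> \<le> K" "\<forall>l\<in>V. \<bar>z' l\<bar> \<le> K" "\<forall>l\<in>V. \<bar>z l - z' l\<bar> \<le> d"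
    then have "\<bar>z l\<bar> \<le> K" "\<bar>z l - z' l\<bar> \<le> d" using \<open>l \<in> V\<close> by blast+
    then show "\<bar>z l\<bar> \<le> \<bar>K\<bar> \<and> \<bar>z l - z' l\<bar> \<le> 1 * d" by simp
  qed
  then show ?case by (intro exI[of _ "\<bar>K\<bar>"] exI[of _ 1]) auto
next
  case (polyfun_add f g)
  then obtain C1 L1 C2 L2 where "0 \<le> C1" "0 \<le> L1" "0 \<le> C2" "0 \<le> L2"
    "box_lipschitz V K C1 L1 f" "box_lipschitz V K C2 L2 g" by blast
  then show ?case by (intro exI[of _ "C1 + C2"] exI[of _ "L1 + L2"] conjI box_lipschitz_add) auto
next
  case (polyfun_mult f g)
  then obtain C1 L1 C2 L2 where "0 \<le> C1" "0 \<le> L1" "0 \<le> C2" "0 \<le> L2"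
    "box_lipschitz V K C1 L1 f" "box_lipschitz V K C2 L2 g" by blast
  then show ?case
    by (intro exI[of _ "C1 * C2"] exI[of _ "C1 * L2 + C2 * L1"] conjI box_lipschitz_mult) auto
qed

definition is_polyfun_gradient ::
    "nat set \<Rightarrow> ((nat \<Rightarrow> real) \<Rightarrow> real) \<Rightarrow> (nat \<Rightarrow> (nat \<Rightarrow> real) \<Rightarrow> real) \<Rightarrow> bool"
  where "is_polyfun_gradient V f D \<longleftrightarrow> (\<forall>l. polyfun V (D l)) \<and>
    (\<forall>Z Z' x S. (\<forall>l\<in>V. ((\<lambda>s. Z s l) has_real_derivative Z' l) (at x within S)) \<longrightarrow>
       ((\<lambda>s. f (Z s)) has_real_derivative (\<Sum>l\<in>V. D l (Z x) * Z' l)) (at x within S))"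

lemma is_polyfun_gradient_add:
  assumes "is_polyfun_gradient V f D1" "is_polyfun_gradient V g D2"
  shows "is_polyfun_gradient V (\<lambda>z. f z + g z) (\<lambda>l z. D1 l z + D2 l z)"
  unfolding is_polyfun_gradient_def
proof (intro conjI allI impI)
  fix l show "polyfun V (\<lambda>z. D1 l z + D2 l z)"
    using assms unfolding is_polyfun_gradient_def by (simp add: polyfun_add)
next
  fix Z Z' x S assume "\<forall>l\<in>V. ((\<lambda>s. Z s l) has_real_derivative Z' l) (at x within S)"
  then have "((\<lambda>s. f (Z s)) has_real_derivative (\<Sum>l\<in>V. D1 l (Z x) * Z' l)) (at x within S)"
    "((\<lambda>s. g (Z s)) has_real_derivative (\<Sum>l\<in>V. D2 l (Z x) * Z' l)) (at x within S)"
    using assms unfolding is_polyfun_gradient_def by blast+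
  from DERIV_add[OF this]
  show "((\<lambda>s. f (Z s) + g (Z s)) has_real_derivative
      (\<Sum>l\<in>V. (D1 l (Z x) + D2 l (Z x)) * Z' l)) (at x within S)"
    by (simp add: sum.distrib distrib_right)
qed

lemma is_polyfun_gradient_mult:
  assumes "is_polyfun_gradient V f D1" "is_polyfun_gradient V g D2" "polyfun V f" "polyfun V g"
  shows "is_polyfun_gradient V (\<lambda>z. f z * g z) (\<lambda>l z. D1 l z * g z + f z * D2 l z)"
  unfolding is_polyfun_gradient_def
proof (intro conjI allI impI)
  fix l show "polyfun V (\<lambda>z. D1 l z * g z + f z * D2 l z)"
    using assms unfolding is_polyfun_gradient_def by (simp add: polyfun_add polyfun_mult)
next
  fix Z Z' x S assume "\<forall>l\<in>V. ((\<lambda>s. Z s l) has_real_derivative Z' l) (at x within S)"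
  then have "((\<lambda>s. f (Z s)) has_real_derivative (\<Sum>l\<in>V. D1 l (Z x) * Z' l)) (at x within S)"
    "((\<lambda>s. g (Z s)) has_real_derivative (\<Sum>l\<in>V. D2 l (Z x) * Z' l)) (at x within S)"
    using assms unfolding is_polyfun_gradient_def by blast+
  from DERIV_mult[OF this]
  show "((\<lambda>s. f (Z s) * g (Z s)) has_real_derivative
      (\<Sum>l\<in>V. (D1 l (Z x) * g (Z x) + f (Z x) * D2 l (Z x)) * Z' l)) (at x within S)"
    by (simp add: sum.distrib distrib_right sum_distrib_left sum_distrib_right algebra_simps)
qed

lemma ex_polyfun_gradient:
  assumes "polyfun V f" "finite V"
  shows "\<exists>D. is_polyfun_gradient V f D"
  using assms(1)
proof (induction rule: polyfun.induct)
  case (polyfun_const c)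
  show ?case
    by (intro exI[of _ "\<lambda>l z. 0"]) (auto simp: is_polyfun_gradient_def intro: polyfun.polyfun_const)
next
  case (polyfun_coord l)
  have "(\<Sum>l'\<in>V. (if l' = l then 1 else 0) * Z' l') = (\<Sum>l'\<in>V. if l' = l then Z' l else 0)"
    for Z' :: "nat \<Rightarrow> real" by (intro sum.cong) auto
  then have "(\<Sum>l'\<in>V. (if l' = l then 1 else 0) * Z' l') = Z' l" for Z' :: "nat \<Rightarrow> real"
    using polyfun_coord assms(2) by simp
  then show ?case
    using polyfun_coord unfolding is_polyfun_gradient_def
    by (intro exI[of _ "\<lambda>l' z. if l' = l then 1 else 0"]) (auto intro: polyfun.polyfun_const)
next
  case (polyfun_add f g)
  then show ?case by (blast intro: is_polyfun_gradient_add)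
next
  case (polyfun_mult f g)
  then show ?case by (blast intro: is_polyfun_gradient_mult)
qed

lemma ex_uniform_constant:
  assumes "finite A" "\<And>a. a \<in> A \<Longrightarrow> \<exists>L\<ge>0. Q a (L::real)"
    "\<And>a L L'. a \<in> A \<Longrightarrow> Q a L \<Longrightarrow> L \<le> L' \<Longrightarrow> Q a L'"
  shows "\<exists>L\<ge>0. \<forall>a\<in>A. Q a L"
proof -
  obtain f where f: "\<forall>a\<in>A. f a \<ge> 0 \<and> Q a (f a)" using assms(2) by metis
  have "\<forall>a\<in>A. Q a (\<Sum>a\<in>A. f a)"
  proof
    fix a assume a: "a \<in> A"
    have "f a \<le> (\<Sum>a\<in>A. f a)" using f a assms(1) by (intro member_le_sum) auto
    then show "Q a (\<Sum>a\<in>A. f a)" using assms(3)[OF a] f a by blast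
  qed
  moreover have "(\<Sum>a\<in>A. f a) \<ge> 0" using f by (intro sum_nonneg) auto
  ultimately show ?thesis by blast
qed

lemma Bernoulli_inequality_strict:
  fixes y :: real assumes y: "0 < y" and n: "2 \<le> n" shows "1 + real n * y < (1 + y) ^ n"
  using n
proof (induction n rule: dec_induct)
  case base then show ?case using y by (simp add: power2_eq_square algebra_simps)
next
  case (step n)
  have "1 + real (Suc n) * y < (1 + real n * y) * (1 + y)"
    using y step.hyps by (simp add: algebra_simps)
  also have "\<dots> \<le> (1 + y) ^ n * (1 + y)"
    using step.IH y by (intro mult_right_mono) auto
  finally show ?case by (simp add: mult.commute)
qed

lemma powr_power_inverse: "0 \<le> x \<Longrightarrow> 0 < n \<Longrightarrow> (x ^ n) powr (1 / real n) = x"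
  by (cases "x = 0") (simp_all add: powr_realpow[symmetric] powr_powr)

lemma power_powr_inverse: "0 \<le> x \<Longrightarrow> 0 < n \<Longrightarrow> (x powr (1 / real n)) ^ n = x"
  by (cases "x = 0") (simp_all add: powr_power)

lemma eventually_mult_power_less:
  fixes C e q :: real assumes "0 \<le> C" "0 < e" "0 < q" "q < 1"
  shows "\<exists>k0. \<forall>k\<ge>k0. C * q ^ k < e"
proof -
  obtain k0 where k0: "q ^ k0 < e / (C + 1)"
    using real_arch_pow_inv[of "e / (C + 1)" q] assms by auto
  have "C * q ^ k < e" if "k \<ge> k0" for k
  proof -
    have "C * q ^ k \<le> (C + 1) * q ^ k0"
      using assms that by (intro mult_mono power_decreasing) auto
    also have "\<dots> < (C + 1) * (e / (C + 1))" using assms k0 by (intro mult_strict_left_mono) auto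
    also have "\<dots> = e" using assms by simp
    finally show ?thesis .
  qed
  then show ?thesis by blast
qed

lemma geometric_partial_sum_le: "(\<Sum>k\<in>{a..<n}. (3/4::real) ^ (k + 1)) \<le> 4 * (3/4) ^ (a + 1)"
proof -
  have eq: "(\<Sum>k\<in>{a..<a + d}. (3/4::real) ^ (k + 1))
      = 4 * (3/4) ^ (a + 1) - 4 * (3/4) ^ (a + d + 1)" for d
    by (induction d) (auto simp: algebra_simps)
  show ?thesis
  proof (cases "a \<le> n")
    case True
    then have "{a..<n} = {a..<a + (n - a)}" by simp
    then show ?thesis using eq[of "n - a"] by simp
  qed simp
qed

lemma summable_geometric_shifted: "summable (\<lambda>k. B * (3/4::real) ^ (k + c))"
  and suminf_geometric_shifted: "(\<Sum>k. B * (3/4::real) ^ (k + c)) = 4 * B * (3/4) ^ c"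
proof -
  have s: "summable (\<lambda>k. (3/4::real) ^ k)" by (rule summable_geometric) simp
  have e: "(\<lambda>k. B * (3/4::real) ^ (k + c)) = (\<lambda>k. (B * (3/4) ^ c) * (3/4) ^ k)"
    by (simp add: power_add fun_eq_iff)
  show "summable (\<lambda>k. B * (3/4::real) ^ (k + c))" unfolding e by (intro summable_mult s)
  have "(\<Sum>k. (B * (3/4::real) ^ c) * (3/4) ^ k) = (B * (3/4) ^ c) * (\<Sum>k. (3/4::real) ^ k)"
    by (rule suminf_mult[OF s])
  also have "(\<Sum>k. (3/4::real) ^ k) = 4" using suminf_geometric[of "3/4::real"] by simp
  finally show "(\<Sum>k. B * (3/4::real) ^ (k + c)) = 4 * B * (3/4) ^ c" unfolding e by simp
qed

lemma sum_atLeast1_atMost_shift: "(\<Sum>k=1..n. f k) = (\<Sum>k<n. f (Suc k))"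
  by (induction n) (auto simp: atLeastAtMostSuc_conv add.commute)

lemma prod_le_eventually_contracting:
  fixes L q :: real
  assumes q: "0 < q" and Lq: "q \<le> L"
    and c: "\<And>j. 0 \<le> c j \<and> c j \<le> L" "\<And>j. j \<ge> N \<Longrightarrow> c j \<le> q"
  shows "(\<Prod>j\<in>{1..<k}. c j) \<le> (L / q) ^ N * q ^ (k - 1)"
proof -
  have L1: "1 \<le> L / q" using q Lq by simp
  have factor: "c j \<le> (L / q) ^ (min (Suc j) N - min j N) * q" for j
  proof (cases "j < N")
    case True
    then have "(L / q) ^ (min (Suc j) N - min j N) * q = L" using q by simp
    then show ?thesis using c(1)[of j] by simp
  next
    case False
    then show ?thesis using c(2)[of j] by simp
  qed
  have main: "(\<Prod>j\<in>{1..<k}. c j) \<le> (L / q) ^ (min k N - min 1 N) * q ^ (k - 1)" if "1 \<le> k" for k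
    using that
  proof (induction k rule: dec_induct)
    case (step k)
    have "(\<Prod>j\<in>{1..<Suc k}. c j) = (\<Prod>j\<in>{1..<k}. c j) * c k"
      using step.hyps by (simp add: prod.atLeastLessThan_Suc)
    also have "\<dots> \<le> ((L / q) ^ (min k N - min 1 N) * q ^ (k - 1)) * ((L / q) ^ (min (Suc k) N - min
        k N) * q)"
      using step.IH c(1)[of k] factor[of k] L1 q by (intro mult_mono) auto
    also have "\<dots> = (L / q) ^ (min (Suc k) N - min 1 N) * q ^ (Suc k - 1)"
    proof -
      have "min (Suc k) N - min 1 N = (min k N - min 1 N) + (min (Suc k) N - min k N)"
        using step.hyps by linarith
      then have e1: "(L / q) ^ (min (Suc k) N - min 1 N)
          = (L / q) ^ (min k N - min 1 N) * (L / q) ^ (min (Suc k) N - min k N)"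
        by (simp only: power_add)
      have e2: "q ^ (Suc k - 1) = q ^ (k - 1) * q" using step.hyps by (cases k) auto
      show ?thesis unfolding e1 e2 by (simp add: mult_ac)
    qed
    finally show ?case .
  qed simp
  show ?thesis
  proof (cases "k = 0")
    case False
    have "(\<Prod>j\<in>{1..<k}. c j) \<le> (L / q) ^ (min k N - min 1 N) * q ^ (k - 1)"
      using main False by simp
    also have "\<dots> \<le> (L / q) ^ N * q ^ (k - 1)"
      using L1 q by (intro mult_right_mono power_increasing) auto
    finally show ?thesis .
  qed (use L1 in \<open>simp add: one_le_power\<close>)
qed

lemma partial_sum_near_suminf:
  fixes f g :: "nat \<Rightarrow> real"
  assumes B: "0 \<le> B" and f: "\<And>k. \<bar>f k\<bar> \<le> B * (3/4) ^ (k + 1)" and g: "\<And>k. \<bar>g k\<bar> \<le> B * (3/4) ^ (k + 1)"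
    and close: "\<And>k. k < K \<Longrightarrow> \<bar>f k - g k\<bar> \<le> \<eta>" and "K \<le> n"
  shows "\<bar>(\<Sum>k<n. f k) - (\<Sum>k. g k)\<bar> \<le> real K * \<eta> + 8 * B * (3/4) ^ (K + 1)"
proof -
  have "summable g"
    by (rule summable_comparison_test[OF _ summable_geometric_shifted[of B 1]]) (use g in auto)
  then have split_g: "(\<Sum>k. g k) = (\<Sum>k. g (k + K)) + (\<Sum>k<K. g k)"
    by (rule suminf_split_initial_segment)
  have split_f: "(\<Sum>k<n. f k) = (\<Sum>k<K. f k) + (\<Sum>k\<in>{K..<n}. f k)"
    using sum.atLeastLessThan_concat[of 0 K n f] \<open>K \<le> n\<close> by (simp add: lessThan_atLeast0)
  have "\<bar>(\<Sum>k<K. f k) - (\<Sum>k<K. g k)\<bar> \<le> real K * \<eta>"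
  proof -
    have "\<bar>(\<Sum>k<K. f k) - (\<Sum>k<K. g k)\<bar> \<le> (\<Sum>k<K. \<bar>f k - g k\<bar>)"
      by (simp add: sum_subtractf[symmetric] sum_abs)
    also have "\<dots> \<le> (\<Sum>k<K. \<eta>)" using close by (intro sum_mono) auto
    finally show ?thesis by simp
  qed
  moreover have "\<bar>\<Sum>k\<in>{K..<n}. f k\<bar> \<le> 4 * B * (3/4) ^ (K + 1)"
  proof -
    have "\<bar>\<Sum>k\<in>{K..<n}. f k\<bar> \<le> (\<Sum>k\<in>{K..<n}. B * (3/4) ^ (k + 1))"
      by (rule order_trans[OF sum_abs]) (intro sum_mono f)
    also have "\<dots> = B * (\<Sum>k\<in>{K..<n}. (3/4) ^ (k + 1))" by (simp add: sum_distrib_left)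
    also have "\<dots> \<le> B * (4 * (3/4) ^ (K + 1))" using B by (intro mult_left_mono geometric_partial_sum_le)
    finally show ?thesis by simp
  qed
  moreover have "\<bar>\<Sum>k. g (k + K)\<bar> \<le> 4 * B * (3/4) ^ (K + 1)"
  proof -
    have "\<bar>\<Sum>k. g (k + K)\<bar> \<le> (\<Sum>k. B * (3/4) ^ (k + (K + 1)))"
      using g by (intro norm_suminf_le[where f = "\<lambda>k. g (k + K)", unfolded real_norm_def]
          summable_geometric_shifted) (simp add: add.assoc)
    also have "\<dots> = 4 * B * (3/4) ^ (K + 1)" by (rule suminf_geometric_shifted)
    finally show ?thesis .
  qed
  ultimately show ?thesis unfolding split_f split_g by linarith
qed

section \<open>The moment polynomials\<close>

lemma prod_eq_factor:
  "finite A \<Longrightarrow> x \<in> A \<Longrightarrow> (\<And>a. a \<in> A \<Longrightarrow> a \<noteq> x \<Longrightarrow> f a = 1) \<Longrightarrow> prod f A = f x"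
  by (subst prod.remove[of A x]) (auto intro!: prod.neutral)

lemma prod_eq_two_factors:
  assumes "finite A" "x \<in> A" "y \<in> A" "x \<noteq> y" "\<And>a. a \<in> A \<Longrightarrow> a \<noteq> x \<Longrightarrow> a \<noteq> y \<Longrightarrow> f a = 1"
  shows "prod f A = f x * f y"
proof -
  have "prod f A = f x * prod f (A - {x})" using assms(1,2) by (rule prod.remove)
  also have "prod f (A - {x}) = f y" using assms by (intro prod_eq_factor) auto
  finally show ?thesis .
qed

definition cell_count :: "nat \<Rightarrow> (nat \<Rightarrow> nat) \<Rightarrow> (nat \<Rightarrow> nat set) \<Rightarrow> nat \<Rightarrow> nat \<Rightarrow> nat" where
  "cell_count k r S a c = card {t\<in>{..<k}. r t = a \<and> c \<in> S t}"

lemma P_cell_count: "P b k y = (1 / real b ^ k) *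
     (\<Sum>r \<in> {..<k} \<rightarrow>\<^sub>E {..<b}. \<Sum>S \<in> {..<k} \<rightarrow>\<^sub>E (Pow {..<b} - {{}}).
        \<Prod>a\<in>{..<b}. \<Prod>c\<in>{..<b}. mom y (cell_count k r S a c))"
  unfolding P_def cell_count_def ..

lemma cell_count_le: "cell_count k r S a c \<le> k"
  unfolding cell_count_def by (rule order_trans[OF card_mono card_lessThan[THEN eq_imp_le]]) auto

lemma prod_mom_axis:
  assumes "finite A" "2 \<le> j"
  shows "(\<Prod>p\<in>A. mom ((\<lambda>_. 0)(j := t)) (n p))
    = (if \<forall>p\<in>A. n p \<in> {0, j} then t ^ card {p\<in>A. n p = j} else 0)"
proof (cases "\<forall>p\<in>A. n p \<in> {0, j}")
  case True
  then have "(\<Prod>p\<in>A. mom ((\<lambda>_. 0)(j := t)) (n p)) = (\<Prod>p\<in>A. t ^ (if n p = j then 1 else 0))"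
    using assms(2) by (intro prod.cong) (auto simp: mom_def)
  also have "\<dots> = t ^ (\<Sum>p\<in>A. if n p = j then 1 else 0)"
    by (simp add: power_sum)
  also have "(\<Sum>p\<in>A. if n p = j then 1 else 0) = card {p\<in>A. n p = j}"
    using assms(1) by (simp add: sum.inter_filter[symmetric])
  finally show ?thesis unfolding if_P[OF True] .
next
  case False
  then obtain p where "p \<in> A" "n p \<notin> {0, j}" by blast
  then show ?thesis using assms False by (intro trans[OF prod_zero]) (auto simp: mom_def)
qed

lemma DERIV_power_at_0: "((\<lambda>t::real. t ^ n) has_real_derivative (if n = 1 then 1 else 0)) (at 0)"
proof -
  have "((\<lambda>t::real. t ^ n) has_real_derivative real n * 0 ^ (n - 1)) (at 0)"
    by (auto intro!: derivative_eq_intros)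
  moreover have "real n * (0::real) ^ (n - 1) = (if n = 1 then 1 else 0)"
    by (cases n; cases "n - 1") auto
  ultimately show ?thesis by (simp only:)
qed

locale moment_recursion =
  fixes b m :: nat
  assumes b_ge_2: "2 \<le> b" and m_ge_3: "3 \<le> m"
begin

lemma b_pos: "0 < real b" using b_ge_2 by simp

lemma mom_polyfun: "n \<le> m \<Longrightarrow> polyfun {2..m} (\<lambda>z. mom z n)"
  unfolding mom_def by (cases "n = 0"; cases "n = 1") (auto intro: polyfun.intros)

lemma P_polyfun: "k \<le> m \<Longrightarrow> polyfun {2..m} (P b k)"
  unfolding P_cell_count
  by (intro polyfun_mult polyfun_const polyfun_sum polyfun_prod finite_PiE mom_polyfun
      order_trans[OF cell_count_le]) auto

lemma Pvec_eq [simp]: "i \<in> {3..m} \<Longrightarrow> Pvec b m x y i = P b i (y(2 := x))"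
  by (simp add: Pvec_def)

lemma mom_nonneg: "n \<le> m \<Longrightarrow> \<forall>l\<in>{2..m}. 0 \<le> z l \<Longrightarrow> 0 \<le> mom z n"
  by (auto simp: mom_def)

lemma mom_mono: "n \<le> m \<Longrightarrow> \<forall>l\<in>{2..m}. z l \<le> z' l \<Longrightarrow> mom z n \<le> mom z' n"
  by (auto simp: mom_def)

lemma P_nonneg: "k \<le> m \<Longrightarrow> \<forall>l\<in>{2..m}. 0 \<le> z l \<Longrightarrow> 0 \<le> P b k z"
  unfolding P_cell_count
  by (intro mult_nonneg_nonneg sum_nonneg prod_nonneg mom_nonneg order_trans[OF cell_count_le]) auto

lemma P_mono: "k \<le> m \<Longrightarrow> \<forall>l\<in>{2..m}. 0 \<le> z l \<and> z l \<le> z' l \<Longrightarrow> P b k z \<le> P b k z'"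
  unfolding P_cell_count
  by (intro mult_left_mono sum_mono prod_mono conjI mom_nonneg mom_mono prod_nonneg
      order_trans[OF cell_count_le]) auto

lemma P_zero: "1 \<le> k \<Longrightarrow> P b k (\<lambda>_. 0) = 0"
proof -
  assume k: "1 \<le> k"
  have zero: "(\<Prod>a\<in>{..<b}. \<Prod>c\<in>{..<b}. mom (\<lambda>_. 0) (cell_count k r S a c)) = 0"
    if r: "r \<in> {..<k} \<rightarrow>\<^sub>E {..<b}" and S: "S \<in> {..<k} \<rightarrow>\<^sub>E (Pow {..<b} - {{}})" for r S
  proof -
    have S0: "S 0 \<in> Pow {..<b} - {{}}" using S k by (auto simp: PiE_def Pi_def)
    then obtain c where c: "c \<in> S 0" by blast
    have "r 0 < b" using r k by (auto simp: PiE_def Pi_def)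
    moreover have "c < b" using S0 c by auto
    moreover have "cell_count k r S (r 0) c \<noteq> 0"
      using c k by (auto simp: cell_count_def card_eq_0_iff)
    ultimately show ?thesis by (intro prod_zero bexI[of _ "r 0"] bexI[of _ c]) (auto simp: mom_def)
  qed
  have "(\<Sum>r \<in> {..<k} \<rightarrow>\<^sub>E {..<b}. \<Sum>S \<in> {..<k} \<rightarrow>\<^sub>E (Pow {..<b} - {{}}).
      \<Prod>a\<in>{..<b}. \<Prod>c\<in>{..<b}. mom (\<lambda>_. 0) (cell_count k r S a c)) = 0"
    by (intro sum.neutral ballI zero; assumption)
  then show ?thesis unfolding P_cell_count by simp
qed

definition dP :: "nat \<Rightarrow> nat \<Rightarrow> (nat \<Rightarrow> real) \<Rightarrow> real" where
  "dP i = (SOME D. is_polyfun_gradient {2..m} (P b i) D)"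

lemma dP_gradient: "i \<le> m \<Longrightarrow> is_polyfun_gradient {2..m} (P b i) (dP i)"
proof -
  assume "i \<le> m"
  then have "\<exists>D. is_polyfun_gradient {2..m} (P b i) D" by (intro ex_polyfun_gradient P_polyfun) auto
  then show ?thesis unfolding dP_def by (rule someI_ex)
qed

lemma dP_polyfun: "i \<le> m \<Longrightarrow> polyfun {2..m} (dP i l)"
  using dP_gradient unfolding is_polyfun_gradient_def by blast

lemma DERIV_P_comp:
  "i \<le> m \<Longrightarrow> (\<And>l. l \<in> {2..m} \<Longrightarrow> ((\<lambda>s. Z s l) has_real_derivative Z' l) (at x within S)) \<Longrightarrow>
    ((\<lambda>s. P b i (Z s)) has_real_derivative (\<Sum>l\<in>{2..m}. dP i l (Z x) * Z' l)) (at x within S)"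
  using dP_gradient unfolding is_polyfun_gradient_def by blast

lemma DERIV_P_partial:
  assumes "i \<le> m" "j \<in> {2..m}"
  shows "((\<lambda>t. P b i (w(j := t))) has_real_derivative dP i j w) (at (w j))"
proof -
  have "((\<lambda>t. P b i (w(j := t))) has_real_derivative
      (\<Sum>l\<in>{2..m}. dP i l (w(j := w j)) * (if l = j then 1 else 0))) (at (w j))"
    by (rule DERIV_P_comp[OF assms(1)]) (auto intro!: derivative_eq_intros)
  also have "(\<Sum>l\<in>{2..m}. dP i l (w(j := w j)) * (if l = j then 1 else 0)) = dP i j w"
    using assms(2) by (simp add: if_distrib cong: if_cong)
  finally show ?thesis .
qed

lemma DP_eq: "i \<in> {3..m} \<Longrightarrow> j \<in> {3..m} \<Longrightarrow> DP b m s w i j = dP i j (w(2 := s))"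
  unfolding DP_def using DERIV_P_partial[of i j "w(2 := s)"]
  by (intro DERIV_imp_deriv) (auto simp: fun_upd_twist)

lemma d1P_eq: "i \<in> {3..m} \<Longrightarrow> d1P b m s w i = dP i 2 (w(2 := s))"
  unfolding d1P_def using DERIV_P_partial[of i 2 "w(2 := s)"] m_ge_3
  by (intro DERIV_imp_deriv) auto

text \<open>The terms of \<open>P\<^sub>i\<close> that are linear in \<open>y\<^sub>j\<close> alone: all \<open>i\<close> draws fall into one cell.\<close>
lemma single_cell_term_iff:
  assumes r: "r \<in> {..<i} \<rightarrow>\<^sub>E {..<b}" and S: "S \<in> {..<i} \<rightarrow>\<^sub>E (Pow {..<b} - {{}})" and "0 < j"
  shows "((\<forall>p\<in>{..<b}\<times>{..<b}. cell_count i r S (fst p) (snd p) \<in> {0, j}) \<and>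
          card {p\<in>{..<b}\<times>{..<b}. cell_count i r S (fst p) (snd p) = j} = 1)
     \<longleftrightarrow> i = j \<and> r \<in> (\<lambda>a. restrict (\<lambda>t. a) {..<i}) ` {..<b} \<and> S \<in> (\<lambda>c. restrict (\<lambda>t. {c}) {..<i}) ` {..<b}"
    (is "?good \<and> ?single \<longleftrightarrow> _")
proof
  assume h: "?good \<and> ?single"
  then obtain p0 where p0: "{p\<in>{..<b}\<times>{..<b}. cell_count i r S (fst p) (snd p) = j} = {p0}"
    using card_1_singletonE by blast
  obtain a0 c0 where ac: "p0 = (a0, c0)" by (cases p0)
  have "p0 \<in> {p\<in>{..<b}\<times>{..<b}. cell_count i r S (fst p) (snd p) = j}" unfolding p0 by simp
  then have p0in: "a0 < b" "c0 < b" "cell_count i r S a0 c0 = j" using ac by simp_all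
  have zero: "cell_count i r S a c = 0" if "a < b" "c < b" "(a, c) \<noteq> (a0, c0)" for a c
  proof -
    have "(a, c) \<notin> {p\<in>{..<b}\<times>{..<b}. cell_count i r S (fst p) (snd p) = j}" using p0 ac that by auto
    then show ?thesis using h that by auto
  qed
  have rt: "r t = a0 \<and> S t = {c0}" if t: "t < i" for t
  proof -
    have St: "S t \<in> Pow {..<b} - {{}}" using S t by (auto simp: PiE_def Pi_def)
    have rtb: "r t < b" using r t by (auto simp: PiE_def Pi_def)
    have key: "(r t, c) = (a0, c0)" if c: "c \<in> S t" for c
    proof (rule ccontr)
      assume ne: "(r t, c) \<noteq> (a0, c0)"
      have "t \<in> {t'\<in>{..<i}. r t' = r t \<and> c \<in> S t'}" using t c by auto
      then have "cell_count i r S (r t) c \<noteq> 0" unfolding cell_count_def by (auto simp: card_eq_0_iff)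
      then show False using zero[OF rtb _ ne] St c by auto
    qed
    obtain c where "c \<in> S t" using St by blast
    then show ?thesis using key St by fastforce
  qed
  have "r = restrict (\<lambda>t. a0) {..<i}" "S = restrict (\<lambda>t. {c0}) {..<i}"
    using r S rt by (auto simp: PiE_def extensional_def fun_eq_iff)
  moreover have "{t\<in>{..<i}. r t = a0 \<and> c0 \<in> S t} = {..<i}" using rt by auto
  then have "i = j" using p0in by (simp add: cell_count_def)
  ultimately show "i = j \<and> r \<in> (\<lambda>a. restrict (\<lambda>t. a) {..<i}) ` {..<b}
      \<and> S \<in> (\<lambda>c. restrict (\<lambda>t. {c}) {..<i}) ` {..<b}"
    using p0in by auto
next
  assume h: "i = j \<and> r \<in> (\<lambda>a. restrict (\<lambda>t. a) {..<i}) ` {..<b}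
      \<and> S \<in> (\<lambda>c. restrict (\<lambda>t. {c}) {..<i}) ` {..<b}"
  then obtain a0 c0 where ac: "a0 < b" "c0 < b" "r = restrict (\<lambda>t. a0) {..<i}" "S
      = restrict (\<lambda>t. {c0}) {..<i}"
    by auto
  have "{t\<in>{..<i}. r t = a \<and> c \<in> S t} = (if a = a0 \<and> c = c0 then {..<i} else {})" for a c
    using ac by auto
  then have cnt: "cell_count i r S a c = (if a = a0 \<and> c = c0 then i else 0)" for a c
    by (simp add: cell_count_def)
  have ij: "i = j" using h by simp
  have "{p\<in>{..<b}\<times>{..<b}. cell_count i r S (fst p) (snd p) = j} = {(a0, c0)}"
    unfolding cnt using ij \<open>0 < j\<close> ac(1,2) by (auto split: if_splits)
  then show "?good \<and> ?single" unfolding cnt using ij by auto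
qed

lemma dP_zero:
  assumes i: "i \<in> {3..m}" and j: "j \<in> {3..m}"
  shows "dP i j (\<lambda>_. 0) = (if i = j then real b ^ 2 / real b ^ i else 0)"
proof -
  define A where "A = {..<i} \<rightarrow>\<^sub>E {..<b}"
  define B where "B = {..<i} \<rightarrow>\<^sub>E (Pow {..<b} - {{}})"
  define RA where "RA = (\<lambda>a. restrict (\<lambda>t. a) {..<i}) ` {..<b}"
  define SB where "SB = (\<lambda>c. restrict (\<lambda>t. {c}) {..<i}) ` {..<b}"
  define good where "good r S \<longleftrightarrow> (\<forall>p\<in>{..<b}\<times>{..<b}. cell_count i r S (fst p) (snd p) \<in> {0, j})" for r S
  define N where "N r S = card {p\<in>{..<b}\<times>{..<b}. cell_count i r S (fst p) (snd p) = j}" for r S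
  have finAB: "finite A" "finite B" unfolding A_def B_def by (auto intro!: finite_PiE)
  have "(\<Prod>a\<in>{..<b}. \<Prod>c\<in>{..<b}. mom ((\<lambda>_. 0)(j := t)) (cell_count i r S a c))
      = (if good r S then t ^ N r S else 0)" for t r S
  proof -
    have "(\<Prod>a\<in>{..<b}. \<Prod>c\<in>{..<b}. mom ((\<lambda>_. 0)(j := t)) (cell_count i r S a c))
        = (\<Prod>p\<in>{..<b}\<times>{..<b}. mom ((\<lambda>_. 0)(j := t)) (cell_count i r S (fst p) (snd p)))"
      by (simp add: prod.cartesian_product case_prod_beta)
    also have "\<dots> = (if good r S then t ^ N r S else 0)"
      unfolding good_def N_def using j by (intro prod_mom_axis) auto
    finally show ?thesis .
  qed
  then have "P b i ((\<lambda>_. 0)(j := t)) = (1 / real b ^ i) * (\<Sum>r\<in>A. \<Sum>S\<in>B. if good r S then t ^ N r S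
      else 0)"
    for t unfolding P_cell_count A_def B_def by simp
  moreover have "((\<lambda>t. if good r S then t ^ N r S else 0) has_real_derivative
      (if good r S \<and> N r S = 1 then 1 else 0)) (at 0)" for r S
    using DERIV_power_at_0[of "N r S"] by (cases "good r S") auto
  ultimately have "((\<lambda>t. P b i ((\<lambda>_. 0)(j := t))) has_real_derivative
      (1 / real b ^ i) * (\<Sum>r\<in>A. \<Sum>S\<in>B. if good r S \<and> N r S = 1 then 1 else 0)) (at 0)"
    by (simp only:) (intro DERIV_cmult DERIV_sum)
  moreover have "((\<lambda>t. P b i ((\<lambda>_. 0)(j := t))) has_real_derivative dP i j (\<lambda>_. 0)) (at 0)"
    using DERIV_P_partial[of i j "\<lambda>_. 0"] i j by auto
  ultimately have "dP i j (\<lambda>_. 0) = (1 / real b ^ i) * (\<Sum>r\<in>A. \<Sum>S\<in>B. if good r S \<and> N r S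
      = 1 then 1 else 0)"
    by (rule DERIV_unique[rotated])
  also have "(\<Sum>r\<in>A. \<Sum>S\<in>B. if good r S \<and> N r S = 1 then 1 else 0) =
      (\<Sum>r\<in>A. \<Sum>S\<in>B. if i = j \<and> r \<in> RA \<and> S \<in> SB then 1 else (0::real))"
    using j unfolding good_def N_def RA_def SB_def A_def B_def
    by (intro sum.cong refl arg_cong[where f = "\<lambda>P. if P then 1 else 0"] single_cell_term_iff) auto
  also have "\<dots> = (if i = j then real b ^ 2 else 0)"
  proof (cases "i = j")
    case True
    have i0: "0 \<in> {..<i}" using i by auto
    have "inj_on (\<lambda>a. restrict (\<lambda>t. a) {..<i}) {..<b}" "inj_on (\<lambda>c. restrict (\<lambda>t. {c}) {..<i}) {..<b}"
      by (intro inj_onI; metis i0 restrict_apply' singleton_inject)+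
    then have "card RA = b" "card SB = b" unfolding RA_def SB_def by (simp_all add: card_image)
    moreover have "RA \<subseteq> A" "SB \<subseteq> B"
      unfolding RA_def A_def SB_def B_def by (auto simp only: restrict_PiE_iff image_subset_iff)
    ultimately have "(\<Sum>S\<in>B. if S \<in> SB then 1 else (0::real)) = real b"
      "(\<Sum>r\<in>A. if r \<in> RA then 1 else (0::real)) = real b"
      using finAB by (simp_all add: sum.If_cases Int_absorb1)
    moreover have "(\<Sum>r\<in>A. \<Sum>S\<in>B. if r \<in> RA \<and> S \<in> SB then 1 else (0::real))
        = (\<Sum>r\<in>A. (if r \<in> RA then 1 else 0) * (\<Sum>S\<in>B. if S \<in> SB then 1 else 0))"
      by (intro sum.cong refl) simp
    ultimately have "(\<Sum>r\<in>A. \<Sum>S\<in>B. if r \<in> RA \<and> S \<in> SB then 1 else (0::real)) = real b * real b"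
      by (simp flip: sum_distrib_right)
    then show ?thesis using True by (simp add: power2_eq_square)
  qed simp
  finally show ?thesis by simp
qed

lemma P_ge_two_cell_term:
  assumes k: "k \<le> m" and z: "\<forall>l\<in>{2..m}. 0 \<le> z l" and S: "S \<in> {..<k} \<rightarrow>\<^sub>E (Pow {0::nat, 1} - {{}})"
  shows "mom z (card {t\<in>{..<k}. 0 \<in> S t}) * mom z (card {t\<in>{..<k}. 1 \<in> S t}) / real b ^ k \<le> P b k z"
proof -
  define r where "r = restrict (\<lambda>t::nat. 0::nat) {..<k}"
  define f where "f r S = (\<Prod>a\<in>{..<b}. \<Prod>c\<in>{..<b}. mom z (cell_count k r S a c))" for r S
  have rA: "r \<in> {..<k} \<rightarrow>\<^sub>E {..<b}" unfolding r_def using b_ge_2 by auto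
  have "Pow {0::nat, 1} - {{}} \<subseteq> Pow {..<b} - {{}}" using b_ge_2 by auto
  then have SB: "S \<in> {..<k} \<rightarrow>\<^sub>E (Pow {..<b} - {{}})" using S PiE_mono by blast
  have f_nonneg: "0 \<le> f r S" for r S
    unfolding f_def using z k by (intro prod_nonneg mom_nonneg order_trans[OF cell_count_le]) auto
  have cnt: "cell_count k r S a c = (if a = 0 then card {t\<in>{..<k}. c \<in> S t} else 0)" for a c
    unfolding cell_count_def r_def by (auto intro: arg_cong[where f = card])
  have empty: "{t\<in>{..<k}. c \<in> S t} = {}" if "c \<noteq> 0" "c \<noteq> 1" for c
    using S that by (auto simp: PiE_def Pi_def)
  have one: "mom z (card {t\<in>{..<k}. c \<in> S t}) = 1" if "c \<noteq> 0" "c \<noteq> 1" for c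
    using empty[OF that] by (simp add: mom_def)
  have "f r S = (\<Prod>c\<in>{..<b}. mom z (card {t\<in>{..<k}. c \<in> S t}))"
    unfolding f_def cnt using b_ge_2 by (subst prod_eq_factor[of _ 0]) (auto simp: mom_def)
  also have "\<dots> = mom z (card {t\<in>{..<k}. 0 \<in> S t}) * mom z (card {t\<in>{..<k}. 1 \<in> S t})"
    using b_ge_2 by (intro prod_eq_two_factors one) auto
  finally have "f r S = \<dots>" .
  moreover have "f r S \<le> (\<Sum>r \<in> {..<k} \<rightarrow>\<^sub>E {..<b}. \<Sum>S \<in> {..<k} \<rightarrow>\<^sub>E (Pow {..<b} - {{}}). f r S)"
    using rA SB f_nonneg
    by (intro order_trans[OF member_le_sum[OF SB] member_le_sum[OF rA]] sum_nonneg) (auto intro!: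
      finite_PiE)
  ultimately show ?thesis unfolding P_cell_count f_def using b_pos by (simp add: field_simps)
qed

lemma P_lower_bound:
  assumes k: "4 \<le> k" "k \<le> m" and z: "\<forall>l\<in>{2..m}. 0 \<le> z l"
  shows "z 2 * z (k - 2) / real b ^ k \<le> P b k z"
proof -
  define S where "S = restrict (\<lambda>t::nat. if t < 2 then {0::nat} else {1}) {..<k}"
  have S: "S \<in> {..<k} \<rightarrow>\<^sub>E (Pow {0, 1} - {{}})" unfolding S_def by auto
  have "{t\<in>{..<k}. 0 \<in> S t} = {0, 1}" "{t\<in>{..<k}. 1 \<in> S t} = {2..<k}"
    unfolding S_def using k by auto
  then have "mom z (card {t\<in>{..<k}. 0 \<in> S t}) = z 2" "mom z (card {t\<in>{..<k}. 1 \<in> S t}) = z (k - 2)"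
    using k by (simp_all add: mom_def numeral_2_eq_2)
  with P_ge_two_cell_term[OF k(2) z S] show ?thesis by simp
qed

lemma P3_lower_bound:
  assumes z: "\<forall>l\<in>{2..m}. 0 \<le> z l"
  shows "z 2 * z 2 / real b ^ 3 \<le> P b 3 z"
proof -
  define S where "S = restrict (\<lambda>t::nat. if t = 0 then {0::nat} else if t
      = 1 then {0, 1} else {1}) {..<3}"
  have S: "S \<in> {..<3} \<rightarrow>\<^sub>E (Pow {0, 1} - {{}})" unfolding S_def by auto
  have "{t\<in>{..<3}. 0 \<in> S t} = {0, 1}" "{t\<in>{..<3}. 1 \<in> S t} = {1, 2}"
    unfolding S_def by auto
  then have "mom z (card {t\<in>{..<3}. 0 \<in> S t}) = z 2" "mom z (card {t\<in>{..<3}. 1 \<in> S t}) = z 2"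
    by (simp_all add: mom_def numeral_2_eq_2)
  with P_ge_two_cell_term[OF m_ge_3 z S] show ?thesis by simp
qed

section \<open>The inverse of \<open>M\<^sub>b\<close> and its iterates\<close>

abbreviation Minv :: "nat \<Rightarrow> real \<Rightarrow> real" where "Minv \<equiv> Mb_inv_pow b"

definition Mb_inv_deriv :: "real \<Rightarrow> real" where
  "Mb_inv_deriv y = (1 + real b * y) powr (1 / real b - 1)"

lemma Mb_inv_nonneg: "0 \<le> y \<Longrightarrow> 0 \<le> Mb_inv b y"
  unfolding Mb_inv_def using b_pos by (simp add: ge_one_powr_ge_zero)

lemma Mb_inv_le: "0 \<le> y \<Longrightarrow> Mb_inv b y \<le> y"
proof -
  assume y: "0 \<le> y"
  have "1 + real b * y \<le> (1 + y) ^ b" using Bernoulli_inequality[of y b] y by simp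
  then have "(1 + real b * y) powr (1 / real b) \<le> ((1 + y) ^ b) powr (1 / real b)"
    using y b_pos by (intro powr_mono2) auto
  also have "\<dots> = 1 + y" using y b_pos by (simp add: powr_power_inverse)
  finally show ?thesis unfolding Mb_inv_def by simp
qed

lemma Mb_inv_less: "0 < y \<Longrightarrow> Mb_inv b y < y"
proof -
  assume y: "0 < y"
  have "1 + real b * y < (1 + y) ^ b" using Bernoulli_inequality_strict[OF y b_ge_2] .
  then have "(1 + real b * y) powr (1 / real b) < ((1 + y) ^ b) powr (1 / real b)"
    using y b_pos by (intro powr_less_mono2) auto
  also have "\<dots> = 1 + y" using y b_pos by (simp add: powr_power_inverse)
  finally show ?thesis unfolding Mb_inv_def by simp
qed

lemma Mb_inv_mono: "0 \<le> y \<Longrightarrow> y \<le> y' \<Longrightarrow> Mb_inv b y \<le> Mb_inv b y'"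
  unfolding Mb_inv_def using b_pos by (auto intro!: powr_mono2 mult_left_mono)

lemma Mb_Mb_inv: "0 \<le> y \<Longrightarrow> Mb b (Mb_inv b y) = y"
  unfolding Mb_def Mb_inv_def using b_pos by (simp add: power_powr_inverse)

lemma Mb_inv_Mb: "0 \<le> x \<Longrightarrow> Mb_inv b (Mb b x) = x"
  unfolding Mb_def Mb_inv_def using b_pos by (simp add: powr_power_inverse)

lemma Mb_inv_0 [simp]: "Mb_inv b 0 = 0" by (simp add: Mb_inv_def)

lemma Mb_nonneg: "0 \<le> x \<Longrightarrow> 0 \<le> Mb b x"
  unfolding Mb_def by (simp add: one_le_power)

lemma DERIV_Mb_inv: "0 \<le> y \<Longrightarrow> (Mb_inv b has_real_derivative Mb_inv_deriv y) (at y)"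
proof -
  assume y: "0 \<le> y"
  have pos: "0 < 1 + real b * y" using y b_pos by (simp add: add_pos_nonneg)
  have "((\<lambda>y. (1 + real b * y) powr (1 / real b) - 1) has_real_derivative
      (1 + real b * y) powr (1 / real b - 1)) (at y)"
    using pos b_pos by (auto intro!: derivative_eq_intros)
  then show ?thesis unfolding Mb_inv_def[abs_def] Mb_inv_deriv_def by simp
qed

lemma Mb_inv_deriv_bounds: "0 \<le> y \<Longrightarrow> 0 \<le> Mb_inv_deriv y \<and> Mb_inv_deriv y \<le> 1"
proof -
  assume y: "0 \<le> y"
  have one: "1 \<le> 1 + real b * y" using y b_pos by simp
  have "(1 + real b * y) powr (1 / real b - 1) \<le> (1 + real b * y) powr 0"
    using one b_ge_2 by (intro powr_mono) (auto simp: field_simps)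
  then show ?thesis unfolding Mb_inv_deriv_def using one by simp
qed

lemma isCont_Mb_inv: "0 \<le> y \<Longrightarrow> isCont (Mb_inv b) y"
  using DERIV_Mb_inv DERIV_isCont by blast

lemma Minv_0 [simp]: "Minv 0 x = x" by (simp add: Mb_inv_pow_def)

lemma Minv_Suc: "Minv (Suc n) x = Minv n (Mb_inv b x)"
  by (simp only: Mb_inv_pow_def funpow_Suc_right o_apply)

lemma Minv_Suc': "Minv (Suc n) x = Mb_inv b (Minv n x)"
  by (simp add: Mb_inv_pow_def)

lemma Minv_Suc0 [simp]: "Minv (Suc 0) x = Mb_inv b x" by (simp add: Mb_inv_pow_def)

lemma Minv_nonneg: "0 \<le> x \<Longrightarrow> 0 \<le> Minv n x"
  by (induction n) (auto simp: Minv_Suc' Mb_inv_nonneg)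

lemma Minv_le: "0 \<le> x \<Longrightarrow> Minv n x \<le> x"
  by (induction n) (auto simp: Minv_Suc' intro: order_trans[OF Mb_inv_le] Minv_nonneg)

lemma Minv_mono: "0 \<le> x \<Longrightarrow> x \<le> x' \<Longrightarrow> Minv n x \<le> Minv n x'"
  by (induction n) (auto simp: Minv_Suc' intro!: Mb_inv_mono Minv_nonneg)

lemma Minv_antimono: assumes x: "0 \<le> x" and nn: "n \<le> n'" shows "Minv n' x \<le> Minv n x"
  using nn
proof (induction n' rule: dec_induct)
  case (step k) then show ?case using Mb_inv_le[OF Minv_nonneg[OF x]] by (metis Minv_Suc' order_trans)
qed simp

lemma Minv_tendsto_0: assumes R: "0 \<le> R" shows "(\<lambda>n. Minv n R) \<longlonglongrightarrow> 0"
proof -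
  have dec: "decseq (\<lambda>n. Minv n R)" unfolding decseq_def using Minv_antimono R by blast
  have bdd: "\<forall>n. 0 \<le> Minv n R" using Minv_nonneg R by blast
  obtain L where L: "(\<lambda>n. Minv n R) \<longlonglongrightarrow> L"
    using decseq_convergent[OF dec bdd] by blast
  have L0: "0 \<le> L" using L bdd by (intro LIMSEQ_le_const) auto
  have "(\<lambda>n. Mb_inv b (Minv n R)) \<longlonglongrightarrow> Mb_inv b L"
    using isCont_Mb_inv[OF L0] L isCont_tendsto_compose by blast
  moreover have "(\<lambda>n. Mb_inv b (Minv n R)) \<longlonglongrightarrow> L"
    using L unfolding Minv_Suc'[symmetric] by (rule LIMSEQ_Suc)
  ultimately have "Mb_inv b L = L" using LIMSEQ_unique by blast
  then have "L = 0" using Mb_inv_less[of L] L0 by force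
  then show ?thesis using L by simp
qed

lemma Minv_uniformly_small: assumes "0 \<le> R" "0 < d" shows "\<exists>N. \<forall>n\<ge>N. \<forall>x\<in>{0..R}. Minv n x \<le> d"
proof -
  obtain N where N: "\<forall>n\<ge>N. \<bar>Minv n R\<bar> < d"
    using Minv_tendsto_0[OF assms(1)] assms(2) unfolding lim_sequentially dist_real_def by fastforce
  show ?thesis
  proof (intro exI allI impI ballI)
    fix n x assume "N \<le> n" "x \<in> {0..R}"
    then show "Minv n x \<le> d" using N Minv_mono[of x R n] by fastforce
  qed
qed

definition Minv_deriv :: "nat \<Rightarrow> real \<Rightarrow> real" where
  "Minv_deriv k x = (\<Prod>j<k. Mb_inv_deriv (Minv j x))"

lemma DERIV_Minv: "0 \<le> x \<Longrightarrow> (Minv k has_real_derivative Minv_deriv k x) (at x)"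
proof (induction k)
  case 0 then show ?case by (simp add: Minv_deriv_def Mb_inv_pow_def)
next
  case (Suc k)
  have eq: "Minv (Suc k) = Mb_inv b \<circ> Minv k" by (simp add: fun_eq_iff Minv_Suc')
  have D: "(Mb_inv b \<circ> Minv k has_real_derivative Mb_inv_deriv (Minv k x) * Minv_deriv k x) (at x)"
    using Suc Minv_nonneg by (intro DERIV_chain DERIV_Mb_inv) auto
  have Minv_deriv_Suc_eq: "Minv_deriv (Suc k) x = Mb_inv_deriv (Minv k x) * Minv_deriv k x"
    by (simp add: Minv_deriv_def mult.commute)
  show ?case unfolding Minv_deriv_Suc_eq eq by (rule D)
qed

lemma deriv_Minv: "0 \<le> x \<Longrightarrow> deriv (Minv k) x = Minv_deriv k x"
  by (rule DERIV_imp_deriv[OF DERIV_Minv])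

lemma Minv_deriv_bounds: "0 \<le> x \<Longrightarrow> 0 \<le> Minv_deriv k x \<and> Minv_deriv k x \<le> 1"
  unfolding Minv_deriv_def using Mb_inv_deriv_bounds Minv_nonneg by (auto intro!: prod_nonneg prod_le_1)

lemma Minv_deriv_Suc: "Minv_deriv (Suc k) x = Minv_deriv k (Mb_inv b x) * Mb_inv_deriv x"
  unfolding Minv_deriv_def by (simp only: prod.lessThan_Suc_shift Minv_Suc Minv_0 mult.commute)

lemma Fcomp_0 [simp]: "Fcomp b m x 0 y = y" by (simp add: Fcomp_def)

lemma Fcomp_Suc: "Fcomp b m x (Suc n) y = Pvec b m (Mb_inv b x) (Fcomp b m (Mb_inv b x) n y)"
proof -
  have eq: "[1..<Suc (Suc n)] = 1 # map Suc [1..<Suc n]" by (simp add: upt_conv_Cons map_Suc_upt)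
  have f: "(\<lambda>k w. Fmap b m x k w) \<circ> Suc = (\<lambda>k w. Fmap b m (Mb_inv b x) k w)"
    by (simp add: fun_eq_iff Fmap_def Minv_Suc)
  have "foldr (\<lambda>k w. Fmap b m x k w) (1 # map Suc [1..<Suc n]) y
     = Fmap b m x 1 (foldr ((\<lambda>k w. Fmap b m x k w) \<circ> Suc) [1..<Suc n] y)"
    by (simp only: foldr_Cons foldr_map o_apply)
  also have "\<dots> = Pvec b m (Mb_inv b x) (Fcomp b m (Mb_inv b x) n y)"
    unfolding f Fcomp_def by (simp add: Fmap_def)
  finally show ?thesis unfolding Fcomp_def eq .
qed

lemma Fcomp_add: "Fcomp b m x (a + n) y = Fcomp b m x a (Fcomp b m (Minv a x) n y)"
  by (induction a arbitrary: x) (simp_all add: Fcomp_Suc Minv_Suc)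


section \<open>Contraction on a small box\<close>

definition in_box :: "real \<Rightarrow> (nat \<Rightarrow> real) \<Rightarrow> bool" where
  "in_box c w \<longleftrightarrow> (\<forall>i\<in>{3..m}. \<bar>w i\<bar> \<le> c)"

definition near :: "real \<Rightarrow> (nat \<Rightarrow> real) \<Rightarrow> (nat \<Rightarrow> real) \<Rightarrow> bool" where
  "near d w w' \<longleftrightarrow> (\<forall>i\<in>{3..m}. \<bar>w i - w' i\<bar> \<le> d)"

lemma near_nonneg: "near d w w' \<Longrightarrow> 0 \<le> d"
  unfolding near_def using m_ge_3 by (metis abs_ge_zero atLeastAtMost_iff le_refl order_trans)

lemma near_refl: "near 0 w w"
  unfolding near_def by simp

lemma near_sym: "near d w w' \<Longrightarrow> near d w' w"
  unfolding near_def by (simp add: abs_minus_commute)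

lemma near_mono: "near d w w' \<Longrightarrow> d \<le> d' \<Longrightarrow> near d' w w'"
  unfolding near_def by fastforce

lemma in_box_near: "in_box c w \<Longrightarrow> in_box c' w' \<Longrightarrow> near (c + c') w w'"
  unfolding near_def in_box_def by (smt (verit, best))

lemma in_box_mono: "in_box c w \<Longrightarrow> c \<le> c' \<Longrightarrow> in_box c' w"
  unfolding in_box_def by fastforce

lemma in_box_zero: "0 \<le> c \<Longrightarrow> in_box c (\<lambda>_. 0)"
  unfolding in_box_def by simp

lemma in_box_upd: "in_box K w \<Longrightarrow> \<bar>s\<bar> \<le> K \<Longrightarrow> \<forall>l\<in>{2..m}. \<bar>(w(2 := s)) l\<bar> \<le> K"
  unfolding in_box_def by (auto simp: le_Suc_eq)

lemma near_upd: "near d w w' \<Longrightarrow> \<forall>l\<in>{2..m}. \<bar>(w(2 := s)) l - (w'(2 := s)) l\<bar> \<le> d"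
  using near_nonneg[of d w w'] unfolding near_def by (auto simp: le_Suc_eq)

lemma Icc_2_eq_insert: "{2..m} = insert 2 {3..m}"
  using m_ge_3 by auto

lemma ex_uniform_box_lipschitz:
  assumes "finite A" "\<And>a. a \<in> A \<Longrightarrow> polyfun {2..m} (f a)"
  shows "\<exists>L\<ge>0. \<forall>a\<in>A. box_lipschitz {2..m} K L L (f a)"
proof (rule ex_uniform_constant[OF assms(1)])
  fix a assume "a \<in> A"
  then obtain C L where "0 \<le> C" "0 \<le> L" "box_lipschitz {2..m} K C L (f a)"
    using polyfun_box_lipschitz assms(2) by blast
  then show "\<exists>L\<ge>0. box_lipschitz {2..m} K L L (f a)"
    using m_ge_3 by (intro exI[of _ "max C L"]) (auto intro: box_lipschitz_mono)
next
  fix a L L' assume "box_lipschitz {2..m} K L L (f a)" "L \<le> L'"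
  then show "box_lipschitz {2..m} K L' L' (f a)" using m_ge_3 by (auto intro: box_lipschitz_mono)
qed

lemma dP_zero_row_sum: "i \<in> {3..m} \<Longrightarrow> (\<Sum>j\<in>{3..m}. \<bar>dP i j (\<lambda>_. 0)\<bar>) \<le> 1/2"
proof -
  assume i: "i \<in> {3..m}"
  have "(\<Sum>j\<in>{3..m}. \<bar>dP i j (\<lambda>_. 0)\<bar>) = (\<Sum>j\<in>{3..m}. if i = j then real b ^ 2 / real b ^ i else 0)"
    using i by (intro sum.cong) (auto simp: dP_zero)
  also have "\<dots> = real b ^ 2 / real b ^ i" using i by simp
  also have "\<dots> \<le> 1/2"
  proof -
    have "i = 2 + (i - 2)" using i by auto
    then have pow: "real b ^ i = real b ^ 2 * real b ^ (i - 2)" by (metis power_add)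
    have "real b ^ 1 \<le> real b ^ (i - 2)" using i b_ge_2 by (intro power_increasing) auto
    moreover have "2 \<le> real b" using b_ge_2 by simp
    ultimately have "2 \<le> real b ^ (i - 2)" unfolding power_one_right by linarith
    then show ?thesis using pow b_pos by (simp add: field_simps)
  qed
  finally show ?thesis .
qed

lemma ex_contraction_radius:
  "\<exists>\<eta>>0. \<eta> \<le> 1 \<and> (\<forall>z. (\<forall>l\<in>{2..m}. \<bar>z l\<bar> \<le> \<eta>) \<longrightarrow> (\<forall>i\<in>{3..m}. (\<Sum>j\<in>{3..m}. \<bar>dP i j z\<bar>) \<le> 3/4))"
proof -
  obtain L where L: "0 \<le> L" "\<forall>p\<in>{3..m}\<times>{3..m}. box_lipschitz {2..m} 1 L L (dP (fst p) (snd p))"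
    using ex_uniform_box_lipschitz[of "{3..m}\<times>{3..m}" "\<lambda>p. dP (fst p) (snd p)" 1] dP_polyfun by auto
  define n where "n = real (card {3..m})"
  define \<eta> where "\<eta> = min 1 (1 / (4 * (L + 1) * (n + 1)))"
  have pos: "0 < 4 * (L + 1) * (n + 1)" using L unfolding n_def by (intro mult_pos_pos) auto
  then have \<eta>: "0 < \<eta>" "\<eta> \<le> 1" unfolding \<eta>_def by auto
  have "n * (L * \<eta>) \<le> (n + 1) * ((L + 1) * (1 / (4 * (L + 1) * (n + 1))))"
    using L \<eta> unfolding \<eta>_def n_def by (intro mult_mono) auto
  also have "\<dots> = 1/4" using pos by (simp add: field_simps)
  finally have \<eta>L: "n * (L * \<eta>) \<le> 1/4" .
  show ?thesis
  proof (intro exI[of _ \<eta>] conjI allI impI ballI \<eta>)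
    fix z i assume z: "\<forall>l\<in>{2..m}. \<bar>z l\<bar> \<le> \<eta>" and i: "i \<in> {3..m}"
    have "\<bar>dP i j z\<bar> \<le> \<bar>dP i j (\<lambda>_. 0)\<bar> + L * \<eta>" if j: "j \<in> {3..m}" for j
    proof -
      have "box_lipschitz {2..m} 1 L L (dP i j)" using L(2) i j by auto
      moreover have "\<forall>l\<in>{2..m}. \<bar>z l\<bar> \<le> 1" "\<forall>l\<in>{2..m}. \<bar>z l - 0\<bar> \<le> \<eta>" using z \<eta> by force+
      ultimately have "\<bar>dP i j z - dP i j (\<lambda>_. 0)\<bar> \<le> L * \<eta>"
        using box_lipschitzD[of _ _ _ _ _ z "\<lambda>_. 0" \<eta>] by simp
      then show ?thesis by linarith
    qed
    then have "(\<Sum>j\<in>{3..m}. \<bar>dP i j z\<bar>) \<le> (\<Sum>j\<in>{3..m}. \<bar>dP i j (\<lambda>_. 0)\<bar> + L * \<eta>)"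
      by (intro sum_mono)
    also have "\<dots> = (\<Sum>j\<in>{3..m}. \<bar>dP i j (\<lambda>_. 0)\<bar>) + n * (L * \<eta>)"
      unfolding n_def by (simp add: sum.distrib)
    also have "\<dots> \<le> 3/4" using dP_zero_row_sum[OF i] \<eta>L by linarith
    finally show "(\<Sum>j\<in>{3..m}. \<bar>dP i j z\<bar>) \<le> 3/4" .
  qed
qed

text \<open>The \<open>\<epsilon>\<close> of the theorem: for \<open>|s| \<le> \<epsilon>\<close> the map \<open>P\<^sub>m(s, \<cdot>)\<close> is a \<open>3/4\<close>-contraction
  of the \<open>\<epsilon>\<close>-box in the sup norm.\<close>
definition eps :: real where
  "eps = (SOME \<eta>. 0 < \<eta> \<and> \<eta> \<le> 1 \<and>
     (\<forall>z. (\<forall>l\<in>{2..m}. \<bar>z l\<bar> \<le> \<eta>) \<longrightarrow> (\<forall>i\<in>{3..m}. (\<Sum>j\<in>{3..m}. \<bar>dP i j z\<bar>) \<le> 3/4)))"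

lemma eps_pos: "0 < eps" and eps_le_1: "eps \<le> 1"
  and dP_row_sum_le: "\<forall>l\<in>{2..m}. \<bar>z l\<bar> \<le> eps \<Longrightarrow> i \<in> {3..m} \<Longrightarrow> (\<Sum>j\<in>{3..m}. \<bar>dP i j z\<bar>) \<le> 3/4"
  using someI_ex[OF ex_contraction_radius, folded eps_def] by blast+

lemma ex_invariance_radius:
  "\<exists>\<delta>>0. \<delta> \<le> eps \<and> (\<forall>i\<in>{3..m}. \<forall>s\<in>{0..\<delta>}. \<bar>Pvec b m s (\<lambda>_. 0) i\<bar> \<le> eps / 4)"
proof -
  obtain L where L: "0 \<le> L" "\<forall>i\<in>{3..m}. box_lipschitz {2..m} 1 L L (P b i)"
    using ex_uniform_box_lipschitz[of "{3..m}" "P b" 1] P_polyfun by auto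
  define \<delta> where "\<delta> = min eps (eps / (4 * (L + 1)))"
  have \<delta>: "0 < \<delta>" "\<delta> \<le> eps" unfolding \<delta>_def using eps_pos L by auto
  have "\<bar>Pvec b m s (\<lambda>_. 0) i\<bar> \<le> eps / 4" if i: "i \<in> {3..m}" and s: "s \<in> {0..\<delta>}" for i s
  proof -
    have "\<forall>l\<in>{2..m}. \<bar>((\<lambda>_. 0)(2 := s)) l\<bar> \<le> 1" "\<forall>l\<in>{2..m}. \<bar>((\<lambda>_. 0)(2 := s)) l - 0\<bar> \<le> s"
      using s \<delta> eps_le_1 by auto
    then have "\<bar>P b i ((\<lambda>_. 0)(2 := s)) - P b i (\<lambda>_. 0)\<bar> \<le> L * s"
      using box_lipschitzD[OF L(2)[rule_format, OF i], of "(\<lambda>_. 0)(2 := s)" "\<lambda>_. 0" s] by simp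
    also have "L * s \<le> (L + 1) * (eps / (4 * (L + 1)))"
      using s L unfolding \<delta>_def by (intro mult_mono) auto
    also have "\<dots> = eps / 4" using L by (simp add: field_simps)
    finally show ?thesis using i P_zero[of i] by simp
  qed
  then show ?thesis using \<delta> by blast
qed

text \<open>For \<open>x \<le> \<delta>\<close> the maps \<open>F\<^sub>n\<^sup>(\<^sup>x\<^sup>)\<close> also map the \<open>\<epsilon>\<close>-box into itself.\<close>
definition delta :: real where
  "delta = (SOME \<delta>. 0 < \<delta> \<and> \<delta> \<le> eps \<and> (\<forall>i\<in>{3..m}. \<forall>s\<in>{0..\<delta>}. \<bar>Pvec b m s (\<lambda>_. 0) i\<bar> \<le> eps / 4))"

lemma delta_pos: "0 < delta" and delta_le_eps: "delta \<le> eps"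
  and Pvec_zero_small: "i \<in> {3..m} \<Longrightarrow> s \<in> {0..delta} \<Longrightarrow> \<bar>Pvec b m s (\<lambda>_. 0) i\<bar> \<le> eps / 4"
  using someI_ex[OF ex_invariance_radius, folded delta_def] by blast+

lemma abs_convex_comb_le:
  fixes a c \<xi> :: real
  assumes "0 \<le> \<xi>" "\<xi> \<le> 1" "\<bar>a\<bar> \<le> c" "\<bar>a'\<bar> \<le> c"
  shows "\<bar>(1 - \<xi>) * a + \<xi> * a'\<bar> \<le> c"
proof -
  have "\<bar>(1 - \<xi>) * a + \<xi> * a'\<bar> \<le> (1 - \<xi>) * \<bar>a\<bar> + \<xi> * \<bar>a'\<bar>"
    using assms(1,2) by (metis abs_mult abs_of_nonneg abs_triangle_ineq diff_ge_0_iff_ge)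
  also have "\<dots> \<le> (1 - \<xi>) * c + \<xi> * c" using assms by (intro add_mono mult_left_mono) auto
  finally show ?thesis by (simp add: algebra_simps)
qed

lemma Pvec_contraction:
  assumes s: "\<bar>s\<bar> \<le> eps" and w: "in_box eps w" and w': "in_box eps w'" and d: "near d w w'"
  shows "near (3/4 * d) (Pvec b m s w) (Pvec b m s w')"
  unfolding near_def
proof
  fix i assume i: "i \<in> {3..m}"
  define Z where "Z \<tau> = (\<lambda>l. w l + \<tau> * (w' l - w l))(2 := s)" for \<tau> :: real
  define Z' where "Z' l = (if l = 2 then 0 else w' l - w l)" for l
  define \<phi>' where "\<phi>' \<tau> = (\<Sum>l\<in>{2..m}. dP i l (Z \<tau>) * Z' l)" for \<tau>
  have "((\<lambda>\<tau>. P b i (Z \<tau>)) has_real_derivative \<phi>' \<tau>) (at \<tau>)" for \<tau>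
    unfolding \<phi>'_def using i
    by (intro DERIV_P_comp) (auto simp: Z_def Z'_def intro!: derivative_eq_intros)
  then obtain \<xi> where \<xi>: "0 < \<xi>" "\<xi> < 1" "P b i (Z 1) - P b i (Z 0) = \<phi>' \<xi>"
    using MVT2[of 0 1 "\<lambda>\<tau>. P b i (Z \<tau>)" \<phi>'] by auto
  have "\<forall>l\<in>{2..m}. \<bar>Z \<xi> l\<bar> \<le> eps"
  proof
    fix l assume l: "l \<in> {2..m}"
    show "\<bar>Z \<xi> l\<bar> \<le> eps"
    proof (cases "l = 2")
      case False
      then have "Z \<xi> l = (1 - \<xi>) * w l + \<xi> * w' l" unfolding Z_def by (simp add: algebra_simps)
      then show ?thesis
        using w w' l False \<xi> unfolding in_box_def by (auto intro!: abs_convex_comb_le)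
    qed (use s in \<open>simp add: Z_def\<close>)
  qed
  then have row: "(\<Sum>j\<in>{3..m}. \<bar>dP i j (Z \<xi>)\<bar>) \<le> 3/4" using i by (rule dP_row_sum_le)
  have "\<bar>\<phi>' \<xi>\<bar> = \<bar>\<Sum>j\<in>{3..m}. dP i j (Z \<xi>) * (w' j - w j)\<bar>"
    unfolding \<phi>'_def Icc_2_eq_insert Z'_def by simp
  also have "\<dots> \<le> (\<Sum>j\<in>{3..m}. \<bar>dP i j (Z \<xi>)\<bar> * d)"
    using d unfolding near_def
    by (intro order_trans[OF sum_abs] sum_mono) (auto simp: abs_mult abs_minus_commute intro:
      mult_left_mono)
  also have "\<dots> = (\<Sum>j\<in>{3..m}. \<bar>dP i j (Z \<xi>)\<bar>) * d" by (simp add: sum_distrib_right)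
  also have "\<dots> \<le> 3/4 * d" using row near_nonneg[OF d] by (rule mult_right_mono)
  moreover have "Pvec b m s w i - Pvec b m s w' i = - \<phi>' \<xi>" using \<xi>(3) i by (simp add: Z_def)
  ultimately show "\<bar>Pvec b m s w i - Pvec b m s w' i\<bar> \<le> 3/4 * d" by simp
qed

lemma abs_le_eps_if_le_delta: "0 \<le> s \<Longrightarrow> s \<le> delta \<Longrightarrow> \<bar>s\<bar> \<le> eps"
  using delta_le_eps by simp

lemma Pvec_in_box:
  assumes s: "0 \<le> s" "s \<le> delta" and w: "in_box eps w"
  shows "in_box eps (Pvec b m s w)"
  unfolding in_box_def
proof
  fix i assume i: "i \<in> {3..m}"
  have "near (3/4 * (eps + 0)) (Pvec b m s w) (Pvec b m s (\<lambda>_. 0))"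
    using s w eps_pos
    by (intro Pvec_contraction abs_le_eps_if_le_delta in_box_near in_box_zero) auto
  then have "\<bar>Pvec b m s w i - Pvec b m s (\<lambda>_. 0) i\<bar> \<le> 3/4 * eps" using i unfolding near_def by simp
  moreover have "\<bar>Pvec b m s (\<lambda>_. 0) i\<bar> \<le> eps / 4" using Pvec_zero_small i s by simp
  ultimately show "\<bar>Pvec b m s w i\<bar> \<le> eps" by linarith
qed

lemma DP_row_sum_le:
  assumes "\<bar>s\<bar> \<le> eps" "in_box eps w" "i \<in> {3..m}"
  shows "(\<Sum>j\<in>{3..m}. \<bar>DP b m s w i j\<bar>) \<le> 3/4"
proof -
  have "(\<Sum>j\<in>{3..m}. \<bar>DP b m s w i j\<bar>) = (\<Sum>j\<in>{3..m}. \<bar>dP i j (w(2 := s))\<bar>)"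
    using assms(3) by (intro sum.cong) (auto simp: DP_eq)
  also have "\<dots> \<le> 3/4" using dP_row_sum_le[OF in_box_upd[OF assms(2,1)] assms(3)] .
  finally show ?thesis .
qed

lemma Fcomp_in_box: "0 \<le> x \<Longrightarrow> x \<le> delta \<Longrightarrow> in_box eps w \<Longrightarrow> in_box eps (Fcomp b m x n w)"
proof (induction n arbitrary: x)
  case (Suc n)
  have "0 \<le> Mb_inv b x" "Mb_inv b x \<le> delta"
    using Suc.prems Mb_inv_nonneg Mb_inv_le by (auto intro: order_trans)
  then show ?case using Suc by (simp add: Fcomp_Suc Pvec_in_box)
qed simp

lemma Fcomp_contraction:
  "0 \<le> x \<Longrightarrow> x \<le> delta \<Longrightarrow> in_box eps w \<Longrightarrow> in_box eps w' \<Longrightarrow> near d w w' \<Longrightarrow>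
   near ((3/4) ^ n * d) (Fcomp b m x n w) (Fcomp b m x n w')"
proof (induction n arbitrary: x)
  case (Suc n)
  have x1: "0 \<le> Mb_inv b x" "Mb_inv b x \<le> delta"
    using Suc.prems Mb_inv_nonneg Mb_inv_le by (auto intro: order_trans)
  have "near (3/4 * ((3/4) ^ n * d)) (Pvec b m (Mb_inv b x) (Fcomp b m (Mb_inv b x) n w))
      (Pvec b m (Mb_inv b x) (Fcomp b m (Mb_inv b x) n w'))"
    using x1 Suc by (intro Pvec_contraction abs_le_eps_if_le_delta Fcomp_in_box) auto
  then show ?case by (simp add: Fcomp_Suc mult.assoc)
qed simp

lemma Pvec_lipschitz:
  assumes "0 \<le> R" "0 \<le> K"
  shows "\<exists>L\<ge>0. \<forall>s\<in>{0..R}. \<forall>w w' d. in_box K w \<longrightarrow> in_box K w' \<longrightarrow> near d w w' \<longrightarrow>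
     in_box L (Pvec b m s w) \<and> near (L * d) (Pvec b m s w) (Pvec b m s w')"
proof -
  obtain L where L: "0 \<le> L" "\<forall>i\<in>{3..m}. box_lipschitz {2..m} (max R K) L L (P b i)"
    using ex_uniform_box_lipschitz[of "{3..m}" "P b" "max R K"] P_polyfun by auto
  have "in_box L (Pvec b m s w) \<and> near (L * d) (Pvec b m s w) (Pvec b m s w')"
    if s: "s \<in> {0..R}" and w: "in_box K w" "in_box K w'" and d: "near d w w'" for s w w' d
  proof -
    have "in_box (max R K) w" "in_box (max R K) w'" "\<bar>s\<bar> \<le> max R K"
      using w s by (auto intro: in_box_mono)
    then have "\<bar>P b i (w(2 := s))\<bar> \<le> L \<and> \<bar>P b i (w(2 := s)) - P b i (w'(2 := s))\<bar> \<le> L * d"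
      if "i \<in> {3..m}" for i
      using box_lipschitzD[OF L(2)[rule_format, OF that] in_box_upd in_box_upd near_upd[OF d]] by blast
    then show ?thesis unfolding in_box_def near_def by simp
  qed
  then show ?thesis using L(1) by blast
qed

lemma Fcomp_lipschitz:
  assumes R: "0 \<le> R" and K: "0 \<le> K"
  shows "\<exists>K' L. 0 \<le> K' \<and> 0 \<le> L \<and> (\<forall>x\<in>{0..R}. \<forall>w w' d. in_box K w \<longrightarrow> in_box K w' \<longrightarrow> near d w w' \<longrightarrow>
     in_box K' (Fcomp b m x n w) \<and> near (L * d) (Fcomp b m x n w) (Fcomp b m x n w'))"
proof (induction n)
  case 0 then show ?case using K by (intro exI[of _ K] exI[of _ 1]) auto
next
  case (Suc n)
  then obtain K1 L1 where K1: "0 \<le> K1" "0 \<le> L1"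
    "\<forall>x\<in>{0..R}. \<forall>w w' d. in_box K w \<longrightarrow> in_box K w' \<longrightarrow> near d w w' \<longrightarrow>
       in_box K1 (Fcomp b m x n w) \<and> near (L1 * d) (Fcomp b m x n w) (Fcomp b m x n w')" by blast
  obtain L2 where L2: "0 \<le> L2" "\<forall>s\<in>{0..R}. \<forall>w w' d. in_box K1 w \<longrightarrow> in_box K1 w' \<longrightarrow> near d w w' \<longrightarrow>
     in_box L2 (Pvec b m s w) \<and> near (L2 * d) (Pvec b m s w) (Pvec b m s w')"
    using Pvec_lipschitz[OF R K1(1)] by blast
  have "in_box L2 (Fcomp b m x (Suc n) w) \<and>
      near (L2 * L1 * d) (Fcomp b m x (Suc n) w) (Fcomp b m x (Suc n) w')"
    if x: "x \<in> {0..R}" and w: "in_box K w" "in_box K w'" and d: "near d w w'" for x w w' d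
  proof -
    have x1: "Mb_inv b x \<in> {0..R}" using x Mb_inv_nonneg Mb_inv_le by (auto intro: order_trans)
    then have "in_box K1 (Fcomp b m (Mb_inv b x) n w)" "in_box K1 (Fcomp b m (Mb_inv b x) n w')"
      "near (L1 * d) (Fcomp b m (Mb_inv b x) n w) (Fcomp b m (Mb_inv b x) n w')"
      using K1(3) w d near_sym[OF d] by blast+
    then show ?thesis using L2(2) x1 by (simp add: Fcomp_Suc mult.assoc)
  qed
  then show ?case using K1 L2 by (intro exI[of _ L2] exI[of _ "L2 * L1"]) auto
qed

lemma Fcomp_bounded:
  assumes R: "0 \<le> R"
  shows "\<exists>K\<ge>0. \<forall>x\<in>{0..R}. \<forall>n y. in_box eps y \<longrightarrow> in_box K (Fcomp b m x n y)"
proof -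
  obtain N0 where N0: "\<forall>n\<ge>N0. \<forall>x\<in>{0..R}. Minv n x \<le> delta"
    using Minv_uniformly_small[OF R delta_pos] by blast
  have "\<exists>K\<ge>0. \<forall>n\<in>{..N0}. \<forall>x\<in>{0..R}. \<forall>y. in_box eps y \<longrightarrow> in_box K (Fcomp b m x n y)"
  proof (rule ex_uniform_constant)
    fix n
    obtain K' L where "0 \<le> K'" "\<forall>x\<in>{0..R}. \<forall>w w' d. in_box eps w \<longrightarrow> in_box eps w' \<longrightarrow> near d w w' \<longrightarrow>
      in_box K' (Fcomp b m x n w) \<and> near (L * d) (Fcomp b m x n w) (Fcomp b m x n w')"
      using Fcomp_lipschitz[OF R, of eps n] eps_pos by auto
    then show "\<exists>K\<ge>0. \<forall>x\<in>{0..R}. \<forall>y. in_box eps y \<longrightarrow> in_box K (Fcomp b m x n y)"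
      using near_refl by blast
  qed (auto intro: in_box_mono)
  then obtain K where K: "K \<ge> 0" "\<forall>n\<in>{..N0}. \<forall>x\<in>{0..R}. \<forall>y. in_box eps y \<longrightarrow> in_box K (Fcomp b m x n y)"
    by blast
  have "in_box K (Fcomp b m x n y)" if x: "x \<in> {0..R}" and y: "in_box eps y" for x n y
  proof (cases "n \<le> N0")
    case False
    then have n: "n = N0 + (n - N0)" by simp
    have "0 \<le> Minv N0 x" "Minv N0 x \<le> delta" using N0 x Minv_nonneg by auto
    then have "in_box eps (Fcomp b m (Minv N0 x) (n - N0) y)" using y by (rule Fcomp_in_box)
    then have "in_box K (Fcomp b m x N0 (Fcomp b m (Minv N0 x) (n - N0) y))" using K x by auto
    then show ?thesis by (subst n, subst Fcomp_add)
  qed (use K x y in auto)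
  then show ?thesis using K by blast
qed

text \<open>After \<open>N\<^sub>0\<close> steps \<open>M\<^sub>b\<^sup>-\<^sup>n(x) \<le> \<delta>\<close>, so the remaining maps contract; the first \<open>N\<^sub>0\<close> maps
  are merely Lipschitz.\<close>
lemma Fcomp_cauchy:
  assumes R: "0 \<le> R"
  shows "\<exists>N0 C. 0 \<le> C \<and> (\<forall>x\<in>{0..R}. \<forall>k p w w'. in_box eps w \<longrightarrow> in_box eps w' \<longrightarrow>
     near (C * (3/4) ^ k) (Fcomp b m x (N0 + k) w) (Fcomp b m x (N0 + k + p) w'))"
proof -
  obtain N0 where N0: "\<forall>n\<ge>N0. \<forall>x\<in>{0..R}. Minv n x \<le> delta"
    using Minv_uniformly_small[OF R delta_pos] by blast
  obtain K' L where KL: "0 \<le> K'" "0 \<le> L" "\<forall>x\<in>{0..R}. \<forall>w w' d. in_box eps w \<longrightarrow> in_box eps w'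
      \<longrightarrow> near d w w' \<longrightarrow>
      in_box K' (Fcomp b m x N0 w) \<and> near (L * d) (Fcomp b m x N0 w) (Fcomp b m x N0 w')"
    using Fcomp_lipschitz[OF R, of eps N0] eps_pos by auto
  have "near (2 * L * eps * (3/4) ^ k) (Fcomp b m x (N0 + k) w) (Fcomp b m x (N0 + k + p) w')"
    if x: "x \<in> {0..R}" and w: "in_box eps w" "in_box eps w'" for x k p w w'
  proof -
    define X where "X = Minv N0 x"
    have X: "0 \<le> X" "X \<le> delta" unfolding X_def using N0 x Minv_nonneg by auto
    then have "0 \<le> Minv k X" "Minv k X \<le> delta" using Minv_nonneg Minv_le order_trans by blast+
    then have w'': "in_box eps (Fcomp b m (Minv k X) p w')" using w(2) by (rule Fcomp_in_box)
    have e1: "Fcomp b m x (N0 + k) w = Fcomp b m x N0 (Fcomp b m X k w)"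
      unfolding X_def by (rule Fcomp_add)
    have e2: "Fcomp b m x (N0 + k + p) w' = Fcomp b m x N0 (Fcomp b m X k (Fcomp b m (Minv k X) p w'))"
      unfolding X_def by (simp add: Fcomp_add add.assoc)
    have "near ((3/4) ^ k * (eps + eps)) (Fcomp b m X k w) (Fcomp b m X k (Fcomp b m (Minv k X) p w'))"
      using X w w'' by (intro Fcomp_contraction in_box_near) auto
    then have "near (L * ((3/4) ^ k * (eps + eps)))
        (Fcomp b m x (N0 + k) w) (Fcomp b m x (N0 + k + p) w')"
      unfolding e1 e2 using KL(3) x X w w'' Fcomp_in_box by blast
    then show ?thesis by (rule near_mono) (simp add: algebra_simps)
  qed
  then show ?thesis using KL eps_pos by (intro exI[of _ N0] exI[of _ "2 * L * eps"]) auto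
qed

section \<open>The limit \<open>H\<close>\<close>

definition H :: "real \<Rightarrow> nat \<Rightarrow> real" where
  "H x = (\<lambda>i. lim (\<lambda>n. Fcomp b m x n (\<lambda>_. 0) i))"

lemma LIMSEQ_Fcomp_H:
  assumes x: "0 \<le> x" and i: "i \<in> {3..m}"
  shows "(\<lambda>n. Fcomp b m x n (\<lambda>_. 0) i) \<longlonglongrightarrow> H x i"
proof -
  obtain N0 C where C: "0 \<le> C" and NC: "\<forall>x'\<in>{0..x}. \<forall>k p w w'. in_box eps w \<longrightarrow> in_box eps w' \<longrightarrow>
     near (C * (3/4) ^ k) (Fcomp b m x' (N0 + k) w) (Fcomp b m x' (N0 + k + p) w')"
    using Fcomp_cauchy[OF x] by blast
  have z: "in_box eps (\<lambda>_. 0)" using eps_pos by (intro in_box_zero) auto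
  have "Cauchy (\<lambda>n. Fcomp b m x n (\<lambda>_. 0) i)"
  proof (rule metric_CauchyI)
    fix e :: real assume e: "0 < e"
    obtain k0 where k0: "\<forall>k\<ge>k0. C * (3/4) ^ k < e"
      using eventually_mult_power_less[of C e "3/4"] C e by auto
    have "dist (Fcomp b m x n (\<lambda>_. 0) i) (Fcomp b m x n' (\<lambda>_. 0) i) < e"
      if n: "n \<ge> N0 + k0" "n \<le> n'" for n n'
    proof -
      have eq: "n = N0 + (n - N0)" "n' = N0 + (n - N0) + (n' - n)" using n by auto
      have "near (C * (3/4) ^ (n - N0)) (Fcomp b m x (N0 + (n - N0)) (\<lambda>_. 0))
          (Fcomp b m x (N0 + (n - N0) + (n' - n)) (\<lambda>_. 0))"
        using NC x z by auto
      then have "\<bar>Fcomp b m x n (\<lambda>_. 0) i - Fcomp b m x n' (\<lambda>_. 0) i\<bar> \<le> C * (3/4) ^ (n - N0)"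
        using i eq unfolding near_def by metis
      moreover have "C * (3/4) ^ (n - N0) < e" using k0 n by auto
      ultimately show ?thesis by (simp add: dist_real_def)
    qed
    then show "\<exists>M. \<forall>n\<ge>M. \<forall>n'\<ge>M. dist (Fcomp b m x n (\<lambda>_. 0) i) (Fcomp b m x n' (\<lambda>_. 0) i) < e"
      by (metis dist_commute nat_le_linear)
  qed
  then show ?thesis unfolding H_def by (simp add: Cauchy_convergent_iff convergent_LIMSEQ_iff)
qed

lemma Fcomp_near_H:
  assumes R: "0 \<le> R"
  shows "\<exists>N0 C. 0 \<le> C \<and> (\<forall>x\<in>{0..R}. \<forall>k w. in_box eps w \<longrightarrow> near (C * (3/4) ^ k) (Fcomp b m x (N0
      + k) w) (H x))"
proof -
  obtain N0 C where C: "0 \<le> C" and NC: "\<forall>x\<in>{0..R}. \<forall>k p w w'. in_box eps w \<longrightarrow> in_box eps w' \<longrightarrow>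
     near (C * (3/4) ^ k) (Fcomp b m x (N0 + k) w) (Fcomp b m x (N0 + k + p) w')"
    using Fcomp_cauchy[OF R] by blast
  have z: "in_box eps (\<lambda>_. 0)" using eps_pos by (intro in_box_zero) auto
  have "near (C * (3/4) ^ k) (Fcomp b m x (N0 + k) w) (H x)" if x: "x \<in> {0..R}" and w: "in_box eps
      w" for x k w
    unfolding near_def
  proof
    fix i assume i: "i \<in> {3..m}"
    have "(\<lambda>p. \<bar>Fcomp b m x (N0 + k) w i - Fcomp b m x (p + (N0 + k)) (\<lambda>_. 0) i\<bar>)
        \<longlonglongrightarrow> \<bar>Fcomp b m x (N0 + k) w i - H x i\<bar>"
      using x i by (intro tendsto_intros LIMSEQ_ignore_initial_segment LIMSEQ_Fcomp_H) auto
    moreover have "\<bar>Fcomp b m x (N0 + k) w i - Fcomp b m x (p + (N0 + k)) (\<lambda>_. 0) i\<bar>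
        \<le> C * (3/4) ^ k" for p
    proof -
      have "near (C * (3/4) ^ k) (Fcomp b m x (N0 + k) w) (Fcomp b m x (N0 + k + p) (\<lambda>_. 0))"
        using NC x w z by blast
      then show ?thesis using i unfolding near_def by (simp add: add.commute)
    qed
    ultimately show "\<bar>Fcomp b m x (N0 + k) w i - H x i\<bar> \<le> C * (3/4) ^ k"
      by (intro LIMSEQ_le_const2) auto
  qed
  then show ?thesis using C by blast
qed

lemma Fcomp_uniform_conv:
  "\<forall>R\<ge>0. \<forall>e>0. \<exists>N. \<forall>n\<ge>N. \<forall>x\<in>{0..R}. \<forall>y. (\<forall>i\<in>{3..m}. \<bar>y i\<bar> \<le> eps) \<longrightarrow>
     (\<forall>i\<in>{3..m}. \<bar>Fcomp b m x n y i - H x i\<bar> < e)"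
proof (intro allI impI)
  fix R e :: real assume R: "R \<ge> 0" and e: "e > 0"
  obtain N0 C where C: "0 \<le> C" "\<forall>x\<in>{0..R}. \<forall>k w. in_box eps w
      \<longrightarrow> near (C * (3/4) ^ k) (Fcomp b m x (N0 + k) w) (H x)"
    using Fcomp_near_H[OF R] by blast
  obtain k0 where k0: "\<forall>k\<ge>k0. C * (3/4) ^ k < e" using eventually_mult_power_less[of C e "3/4"]
    C(1) e by auto
  have "\<bar>Fcomp b m x n y i - H x i\<bar> < e"
    if n: "n \<ge> N0 + k0" and x: "x \<in> {0..R}" and y: "in_box eps y" and i: "i \<in> {3..m}" for n x y i
  proof -
    have "near (C * (3/4) ^ (n - N0)) (Fcomp b m x (N0 + (n - N0)) y) (H x)" using C(2) x y by blast
    then have "\<bar>Fcomp b m x n y i - H x i\<bar> \<le> C * (3/4) ^ (n - N0)" using i n unfolding near_def by simp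
    also have "\<dots> < e" using k0 n by auto
    finally show ?thesis .
  qed
  then show "\<exists>N. \<forall>n\<ge>N. \<forall>x\<in>{0..R}. \<forall>y. (\<forall>i\<in>{3..m}. \<bar>y i\<bar> \<le> eps) \<longrightarrow>
      (\<forall>i\<in>{3..m}. \<bar>Fcomp b m x n y i - H x i\<bar> < e)"
    unfolding in_box_def by blast
qed

lemma H_in_box: assumes "0 \<le> x" "x \<le> delta" shows "in_box eps (H x)"
  unfolding in_box_def
proof
  fix i assume i: "i \<in> {3..m}"
  have "\<bar>Fcomp b m x n (\<lambda>_. 0) i\<bar> \<le> eps" for n
    using Fcomp_in_box[OF assms in_box_zero] eps_pos i unfolding in_box_def by auto
  then show "\<bar>H x i\<bar> \<le> eps"
    using LIMSEQ_Fcomp_H[OF assms(1) i]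
    by (intro LIMSEQ_le_const2[of "\<lambda>n. \<bar>Fcomp b m x n (\<lambda>_. 0) i\<bar>"]) (auto intro: tendsto_intros)
qed

lemma H_bounded: assumes R: "0 \<le> R" shows "\<exists>K\<ge>0. \<forall>x\<in>{0..R}. in_box K (H x)"
proof -
  obtain K where K: "K \<ge> 0" "\<forall>x\<in>{0..R}. \<forall>n y. in_box eps y \<longrightarrow> in_box K (Fcomp b m x n y)"
    using Fcomp_bounded[OF R] by blast
  have "in_box K (H x)" if x: "x \<in> {0..R}" for x
    unfolding in_box_def
  proof
    fix i assume i: "i \<in> {3..m}"
    have "\<bar>Fcomp b m x n (\<lambda>_. 0) i\<bar> \<le> K" for n
      using K x in_box_zero[of eps] eps_pos i unfolding in_box_def by auto
    then show "\<bar>H x i\<bar> \<le> K"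
      using LIMSEQ_Fcomp_H[of x i] x i
      by (intro LIMSEQ_le_const2[of "\<lambda>n. \<bar>Fcomp b m x n (\<lambda>_. 0) i\<bar>"]) (auto intro: tendsto_intros)
  qed
  then show ?thesis using K by blast
qed

lemma H_Mb: assumes x: "0 \<le> x" and i: "i \<in> {3..m}" shows "H (Mb b x) i = Pvec b m x (H x) i"
proof -
  have "(\<lambda>n. Fcomp b m (Mb b x) (Suc n) (\<lambda>_. 0) i) \<longlonglongrightarrow> H (Mb b x) i"
    using LIMSEQ_Fcomp_H[OF Mb_nonneg[OF x] i] by (rule LIMSEQ_Suc)
  moreover have "Fcomp b m (Mb b x) (Suc n) (\<lambda>_. 0) i = P b i ((Fcomp b m x n (\<lambda>_. 0))(2 := x))" for n
    using i x by (simp add: Fcomp_Suc Mb_inv_Mb)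
  moreover have "(\<lambda>n. P b i ((Fcomp b m x n (\<lambda>_. 0))(2 := x))) \<longlonglongrightarrow> P b i ((H x)(2 := x))"
    using i x LIMSEQ_Fcomp_H[OF x] by (intro polyfun_tendsto[OF P_polyfun]) auto
  ultimately show ?thesis using LIMSEQ_unique i by simp
qed

lemma Fcomp_zero_mono:
  "0 \<le> x \<Longrightarrow> x \<le> x' \<Longrightarrow> i \<in> {3..m} \<Longrightarrow>
    0 \<le> Fcomp b m x n (\<lambda>_. 0) i \<and> Fcomp b m x n (\<lambda>_. 0) i \<le> Fcomp b m x' n (\<lambda>_. 0) i"
proof (induction n arbitrary: x x' i)
  case (Suc n)
  define z where "z t = (Fcomp b m (Mb_inv b t) n (\<lambda>_. 0))(2 := Mb_inv b t)" for t
  have "0 \<le> Mb_inv b x" "Mb_inv b x \<le> Mb_inv b x'" using Suc.prems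
    by (auto intro: Mb_inv_nonneg Mb_inv_mono)
  then have "\<forall>l\<in>{2..m}. 0 \<le> z x l \<and> z x l \<le> z x' l"
    using Suc.IH unfolding z_def by (auto simp: Icc_2_eq_insert)
  then show ?case using Suc.prems(3) P_nonneg P_mono by (simp add: Fcomp_Suc z_def)
qed simp

lemma H_nonneg: "0 \<le> x \<Longrightarrow> i \<in> {3..m} \<Longrightarrow> 0 \<le> H x i"
  using Fcomp_zero_mono[of x x] LIMSEQ_Fcomp_H[of x i] by (intro LIMSEQ_le_const) auto

lemma H_mono: "0 \<le> x \<Longrightarrow> x \<le> x' \<Longrightarrow> i \<in> {3..m} \<Longrightarrow> H x i \<le> H x' i"
  using Fcomp_zero_mono[of x x'] LIMSEQ_Fcomp_H[of x i] LIMSEQ_Fcomp_H[of x' i] by (intro LIMSEQ_le) auto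

lemma Fcomp_at_0: "Fcomp b m 0 n (\<lambda>_. 0) = (\<lambda>_. 0)"
proof (induction n)
  case (Suc n)
  have "Pvec b m 0 (\<lambda>_. 0) = (\<lambda>_. 0)"
    by (auto simp: Pvec_def fun_eq_iff P_zero fun_upd_idem_iff cong: fun_upd_def)
  then show ?case using Suc by (simp add: Fcomp_Suc)
qed simp

lemma H_0: "H 0 i = 0"
  unfolding H_def Fcomp_at_0 by simp

section \<open>Growth of \<open>H\<^sub>m\<close>\<close>

lemma filterlim_at_top_Mb_lower:
  fixes g h :: "real \<Rightarrow> real" and c :: real
  assumes c: "0 < c" and h: "filterlim h at_top at_top"
    and low: "\<And>x. 0 \<le> x \<Longrightarrow> c * x * h x \<le> g (Mb b x)"
  shows "filterlim g at_top at_top"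
  unfolding filterlim_at_top
proof
  fix Z :: real
  have "eventually (\<lambda>x. (\<bar>Z\<bar> + 1) / c \<le> h x) at_top" using h unfolding filterlim_at_top by blast
  then obtain X where X: "\<forall>x\<ge>X. (\<bar>Z\<bar> + 1) / c \<le> h x" unfolding eventually_at_top_linorder by blast
  define X1 where "X1 = max X 1"
  have "Z \<le> g y" if y: "y \<ge> Mb b X1" for y
  proof -
    have X10: "0 \<le> X1" unfolding X1_def by simp
    have y0: "0 \<le> y" using y Mb_nonneg[OF X10] by linarith
    define x where "x = Mb_inv b y"
    have "X1 \<le> x" unfolding x_def using Mb_inv_mono[OF Mb_nonneg[OF X10] y] Mb_inv_Mb[OF X10] by simp
    then have x: "X \<le> x" "1 \<le> x" unfolding X1_def by auto
    have hx: "(\<bar>Z\<bar> + 1) / c \<le> h x" using X x by blast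
    have h_nonneg: "0 \<le> h x" using hx c by (smt (verit) divide_pos_pos)
    have "Z \<le> c * ((\<bar>Z\<bar> + 1) / c)" using c by simp
    also have "\<dots> \<le> c * h x" using hx c by (intro mult_left_mono) auto
    also have "\<dots> \<le> c * x * h x"
      using x h_nonneg c mult_right_mono[of 1 x "c * h x"] by (simp add: mult_ac)
    also have "\<dots> \<le> g (Mb b x)" using low x by simp
    also have "Mb b x = y" unfolding x_def using Mb_Mb_inv[OF y0] .
    finally show ?thesis .
  qed
  then show "eventually (\<lambda>y. Z \<le> g y) at_top" unfolding eventually_at_top_linorder by blast
qed

lemma H_Mb_lower_bound:
  assumes x: "0 \<le> x" and l: "l \<in> {3..m}"
  shows "x * ((H x)(2 := x)) (max 2 (l - 2)) / real b ^ l \<le> H (Mb b x) l"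
proof -
  have z: "\<forall>j\<in>{2..m}. 0 \<le> ((H x)(2 := x)) j" using x H_nonneg by auto
  have "x * ((H x)(2 := x)) (max 2 (l - 2)) / real b ^ l \<le> P b l ((H x)(2 := x))"
  proof (cases "l = 3")
    case True
    have "max 2 (3 - 2) = (2::nat)" by simp
    then show ?thesis using P3_lower_bound[OF z] unfolding True by (simp only: fun_upd_same)
  next
    case False
    then have "4 \<le> l" "l \<le> m" "max 2 (l - 2) = l - 2" using l by auto
    then show ?thesis using P_lower_bound[of l "(H x)(2 := x)"] z by simp
  qed
  also have "\<dots> = H (Mb b x) l" using H_Mb[OF x l] l by simp
  finally show ?thesis .
qed

text \<open>The update \<open>(H x)(2 := x)\<close> plays the role of \<open>H\<^sub>2(x) = x\<close>, so that the growth
  \<open>H\<^sub>l(M\<^sub>b(x)) \<ge> x H\<^sub>m\<^sub>a\<^sub>x\<^sub>(\<^sub>2\<^sub>,\<^sub>l\<^sub>-\<^sub>2\<^sub>)(x) / b\<^sup>l\<close> propagates by induction on \<open>l\<close>.\<close>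
lemma H_upd_at_top: "l \<in> {2..m} \<Longrightarrow> filterlim (\<lambda>x. ((H x)(2 := x)) l) at_top at_top"
proof (induction l rule: less_induct)
  case (less l)
  show ?case
  proof (cases "l = 2")
    case True then show ?thesis by (simp add: filterlim_ident)
  next
    case False
    then have l: "l \<in> {3..m}" using less.prems by auto
    then have "max 2 (l - 2) < l" "max 2 (l - 2) \<in> {2..m}" by auto
    then have IH: "filterlim (\<lambda>x. ((H x)(2 := x)) (max 2 (l - 2))) at_top at_top" by (rule less.IH)
    have "filterlim (\<lambda>x. H x l) at_top at_top"
      using H_Mb_lower_bound[OF _ l] b_pos
      by (intro filterlim_at_top_Mb_lower[OF _ IH, of "1 / real b ^ l"]) (auto simp: field_simps)
    then show ?thesis using False by simp
  qed
qed

lemma H_at_top: "filterlim (\<lambda>x. H x m) at_top at_top"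
  using H_upd_at_top[of m] m_ge_3 by simp

section \<open>Derivatives of the compositions\<close>

text \<open>The \<open>k\<close>-th term of the series in (iv) with the values \<open>H(M\<^sub>b\<^sup>-\<^sup>j(x))\<close> replaced by arbitrary
  vectors \<open>W j\<close>; taking for \<open>W j\<close> the tail compositions, the chain rule expresses the derivative
  of \<open>F\<^sub>1 \<circ> \<dots> \<circ> F\<^sub>n\<close> as a sum of such terms.\<close>
definition chain_term :: "real \<Rightarrow> (nat \<Rightarrow> nat \<Rightarrow> real) \<Rightarrow> nat \<Rightarrow> nat \<Rightarrow> real" where
  "chain_term x W k = (\<lambda>i. foldr (\<lambda>j w. matvec m (DP b m (Minv j x) (W j)) w) [1..<k]
     (d1P b m (Minv k x) (W k)) i * deriv (Minv k) x)"

lemma series_term_eq_chain_term: "series_term b m G k x = chain_term x (\<lambda>j. G (Minv j x)) k"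
  unfolding series_term_def chain_term_def ..

definition dFcomp :: "real \<Rightarrow> nat \<Rightarrow> (nat \<Rightarrow> real) \<Rightarrow> nat \<Rightarrow> real" where
  "dFcomp x n y = (\<lambda>i. \<Sum>k=1..n. chain_term x (\<lambda>j. Fcomp b m (Minv j x) (n - j) y) k i)"

lemma matvec_scale: "matvec m A (\<lambda>i. v i * c) i = matvec m A v i * c"
  unfolding matvec_def by (simp add: sum_distrib_right mult.assoc)

lemma matvec_sum: "finite K \<Longrightarrow> matvec m A (\<lambda>i. \<Sum>k\<in>K. v k i) i = (\<Sum>k\<in>K. matvec m A (v k) i)"
  unfolding matvec_def by (simp add: sum_distrib_left sum.swap[of _ K])

lemma chain_term_1: "0 \<le> x \<Longrightarrow> chain_term x W 1 i = d1P b m (Mb_inv b x) (W 1) i * Mb_inv_deriv x"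
  unfolding chain_term_def by (simp add: deriv_Minv Minv_deriv_def)

lemma chain_term_Suc:
  assumes x: "0 \<le> x" and k: "1 \<le> k"
  shows "chain_term x W (Suc k) i = matvec m (DP b m (Mb_inv b x) (W 1)) (chain_term (Mb_inv b x)
      (\<lambda>j. W (Suc j)) k) i * Mb_inv_deriv x"
proof -
  define x1 where "x1 = Mb_inv b x"
  have x1: "0 \<le> x1" unfolding x1_def using x by (rule Mb_inv_nonneg)
  define f where "f = (\<lambda>j w. matvec m (DP b m (Minv j x) (W j)) w)"
  define f' where "f' = (\<lambda>j w. matvec m (DP b m (Minv j x1) (W (Suc j))) w)"
  have ff: "f \<circ> Suc = f'" unfolding f_def f'_def x1_def by (simp add: fun_eq_iff Minv_Suc)
  have ul: "[1..<Suc k] = 1 # map Suc [1..<k]" using k by (simp add: upt_conv_Cons map_Suc_upt)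
  have A: "foldr f [1..<Suc k] v = f 1 (foldr f' [1..<k] v)" for v
    unfolding ul by (simp add: foldr_map ff)
  have d1eq: "d1P b m (Minv (Suc k) x) (W (Suc k)) = d1P b m (Minv k x1) (W (Suc k))"
    unfolding x1_def by (simp add: Minv_Suc)
  have deq: "deriv (Minv (Suc k)) x = deriv (Minv k) x1 * Mb_inv_deriv x"
    using x x1 unfolding x1_def by (simp add: deriv_Minv Minv_deriv_Suc)
  have "chain_term x W (Suc k) i = foldr f [1..<Suc k] (d1P b m (Minv (Suc k) x) (W (Suc k))) i *
      deriv (Minv (Suc k)) x"
    by (simp only: chain_term_def f_def)
  also have "\<dots> = f 1 (foldr f' [1..<k] (d1P b m (Minv k x1) (W (Suc k)))) i * (deriv (Minv k) x1 *
      Mb_inv_deriv x)"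
    by (simp only: A d1eq deq)
  also have "\<dots> = matvec m (DP b m x1 (W 1)) (\<lambda>i. foldr f' [1..<k] (d1P b m (Minv k x1) (W (Suc k)))
      i * deriv (Minv k) x1) i * Mb_inv_deriv x"
    unfolding f_def by (simp add: matvec_scale x1_def mult.assoc)
  also have "\<dots> = matvec m (DP b m (Mb_inv b x) (W 1)) (chain_term (Mb_inv b x) (\<lambda>j. W (Suc j)) k) i
      * Mb_inv_deriv x"
    unfolding chain_term_def f'_def x1_def ..
  finally show ?thesis .
qed

lemma dFcomp_0: "dFcomp x 0 y i = 0" unfolding dFcomp_def by simp

lemma dFcomp_Suc:
  assumes x: "0 \<le> x"
  shows "dFcomp x (Suc n) y i = (d1P b m (Mb_inv b x) (Fcomp b m (Mb_inv b x) n y) i +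
     matvec m (DP b m (Mb_inv b x) (Fcomp b m (Mb_inv b x) n y)) (dFcomp (Mb_inv b x) n y) i) *
       Mb_inv_deriv x"
proof -
  define x1 where "x1 = Mb_inv b x"
  define W where "W j = Fcomp b m (Minv j x) (Suc n - j) y" for j
  define W' where "W' j = Fcomp b m (Minv j x1) (n - j) y" for j
  have WW: "(\<lambda>j. W (Suc j)) = W'" unfolding W_def W'_def x1_def by (simp add: fun_eq_iff Minv_Suc)
  have W1: "W 1 = Fcomp b m x1 n y" unfolding W_def x1_def by simp
  have "dFcomp x (Suc n) y i = (\<Sum>k=1..Suc n. chain_term x W k i)" unfolding dFcomp_def W_def ..
  also have "\<dots> = chain_term x W 1 i + (\<Sum>k=Suc 1..Suc n. chain_term x W k i)"
    by (rule sum.atLeast_Suc_atMost) simp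
  also have "(\<Sum>k=Suc 1..Suc n. chain_term x W k i) = (\<Sum>k=1..n. chain_term x W (Suc k) i)"
    by (rule sum.shift_bounds_cl_Suc_ivl)
  also have "(\<Sum>k=1..n. chain_term x W (Suc k) i) = (\<Sum>k=1..n. matvec m (DP b m x1 (W 1)) (chain_term
      x1 W' k) i * Mb_inv_deriv x)"
    using x by (intro sum.cong refl) (auto simp: chain_term_Suc WW x1_def)
  also have "\<dots> = matvec m (DP b m x1 (W 1)) (\<lambda>i. \<Sum>k=1..n. chain_term x1 W' k i) i * Mb_inv_deriv x"
    by (simp add: matvec_sum sum_distrib_right)
  also have "(\<lambda>i. \<Sum>k=1..n. chain_term x1 W' k i) = dFcomp x1 n y" unfolding dFcomp_def W'_def ..
  finally show ?thesis using x chain_term_1[of x W i] W1 by (simp add: x1_def algebra_simps)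
qed

lemma DERIV_Fcomp:
  "0 \<le> x \<Longrightarrow> i \<in> {3..m} \<Longrightarrow> ((\<lambda>t. Fcomp b m t n y i) has_real_derivative dFcomp x n y i) (at x)"
proof (induction n arbitrary: x i)
  case 0 then show ?case by (simp add: dFcomp_0)
next
  case (Suc n)
  define x1 where "x1 = Mb_inv b x"
  have x1: "0 \<le> x1" unfolding x1_def using Suc.prems(1) by (rule Mb_inv_nonneg)
  define Z where "Z t = (Fcomp b m (Mb_inv b t) n y)(2 := Mb_inv b t)" for t
  define Z' where "Z' l = (if l = 2 then Mb_inv_deriv x else dFcomp x1 n y l * Mb_inv_deriv x)" for l
  have im: "i \<le> m" using Suc.prems by simp
  have eqf: "(\<lambda>t. Fcomp b m t (Suc n) y i) = (\<lambda>t. P b i (Z t))"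
    unfolding Z_def using Suc.prems by (simp add: fun_eq_iff Fcomp_Suc Pvec_eq)
  have "((\<lambda>t. P b i (Z t)) has_real_derivative (\<Sum>l\<in>{2..m}. dP i l (Z x) * Z' l)) (at x)"
  proof (rule DERIV_P_comp[OF im])
    fix l assume l: "l \<in> {2..m}"
    show "((\<lambda>t. Z t l) has_real_derivative Z' l) (at x)"
    proof (cases "l = 2")
      case True then show ?thesis unfolding Z_def Z'_def using DERIV_Mb_inv[OF Suc.prems(1)] by simp
    next
      case False
      then have l3: "l \<in> {3..m}" using l by auto
      have "((\<lambda>t. Fcomp b m (Mb_inv b t) n y l) has_real_derivative dFcomp x1 n y l * Mb_inv_deriv
          x) (at x)"
        unfolding x1_def by (rule DERIV_chain2[OF Suc.IH[OF _ l3] DERIV_Mb_inv[OF Suc.prems(1)]])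
           (rule x1[unfolded x1_def])
      then show ?thesis unfolding Z_def Z'_def using False by simp
    qed
  qed
  also have "(\<Sum>l\<in>{2..m}. dP i l (Z x) * Z' l) = dFcomp x (Suc n) y i"
  proof -
    have "(\<Sum>l\<in>{2..m}. dP i l (Z x) * Z' l) = dP i 2 (Z x) * Mb_inv_deriv x
        + (\<Sum>j\<in>{3..m}. dP i j (Z x) * (dFcomp x1 n y j * Mb_inv_deriv x))"
      unfolding Icc_2_eq_insert Z'_def by (simp add: sum.insert cong: if_cong)
    also have "\<dots> = (d1P b m x1 (Fcomp b m x1 n y) i
        + matvec m (DP b m x1 (Fcomp b m x1 n y)) (dFcomp x1 n y) i) * Mb_inv_deriv x"
      using Suc.prems unfolding Z_def x1_def matvec_def
      by (simp add: d1P_eq DP_eq algebra_simps sum_distrib_left sum_distrib_right)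
    also have "\<dots> = dFcomp x (Suc n) y i" unfolding x1_def
      by (rule dFcomp_Suc[OF Suc.prems(1), symmetric])
    finally show ?thesis .
  qed
  finally show ?case unfolding eqf .
qed

lemma deriv_Fcomp: "0 \<le> x \<Longrightarrow> i \<in> {3..m} \<Longrightarrow> deriv (\<lambda>t. Fcomp b m t n y i) x = dFcomp x n y i"
  by (rule DERIV_imp_deriv[OF DERIV_Fcomp])


definition row_sum_le :: "(nat \<Rightarrow> nat \<Rightarrow> real) \<Rightarrow> real \<Rightarrow> bool" where
  "row_sum_le A c \<longleftrightarrow> (\<forall>i\<in>{3..m}. (\<Sum>j\<in>{3..m}. \<bar>A i j\<bar>) \<le> c)"

lemma matvec_in_box:
  assumes A: "row_sum_le A c" and v: "in_box B v" and B: "0 \<le> B"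
  shows "in_box (c * B) (matvec m A v)"
  unfolding in_box_def
proof
  fix i assume i: "i \<in> {3..m}"
  have "\<bar>matvec m A v i\<bar> \<le> (\<Sum>j\<in>{3..m}. \<bar>A i j\<bar> * \<bar>v j\<bar>)"
    unfolding matvec_def by (rule order_trans[OF sum_abs]) (simp add: abs_mult)
  also have "\<dots> \<le> (\<Sum>j\<in>{3..m}. \<bar>A i j\<bar> * B)"
    using v unfolding in_box_def by (intro sum_mono mult_left_mono) auto
  also have "\<dots> = (\<Sum>j\<in>{3..m}. \<bar>A i j\<bar>) * B" by (simp add: sum_distrib_right)
  also have "\<dots> \<le> c * B" using A i B unfolding row_sum_le_def by (intro mult_right_mono) auto
  finally show "\<bar>matvec m A v i\<bar> \<le> c * B" .
qed

lemma matvec_near: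
  assumes A': "row_sum_le A' c" and AA: "row_sum_le (\<lambda>i j. A i j - A' i j) e" and v: "in_box B v"
    and B: "0 \<le> B"
    and d: "near d v v'"
  shows "near (e * B + c * d) (matvec m A v) (matvec m A' v')"
  unfolding near_def
proof
  fix i assume i: "i \<in> {3..m}"
  have "matvec m A v i - matvec m A' v' i = matvec m (\<lambda>i j. A i j - A' i j) v i
      + matvec m A' (\<lambda>j. v j - v' j) i"
    unfolding matvec_def by (simp add: sum_subtractf[symmetric] sum.distrib[symmetric] algebra_simps)
  also have "\<bar>\<dots>\<bar> \<le> \<bar>matvec m (\<lambda>i j. A i j - A' i j) v i\<bar> + \<bar>matvec m A' (\<lambda>j. v j - v' j) i\<bar>"
    by (rule abs_triangle_ineq)
  also have "\<dots> \<le> e * B + c * d"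
  proof (rule add_mono)
    show "\<bar>matvec m (\<lambda>i j. A i j - A' i j) v i\<bar> \<le> e * B"
      using matvec_in_box[OF AA v B] i unfolding in_box_def by blast
    have bd: "in_box d (\<lambda>j. v j - v' j)" using d unfolding near_def in_box_def by simp
    from matvec_in_box[OF A' bd near_nonneg[OF d]] i
    show "\<bar>matvec m A' (\<lambda>j. v j - v' j) i\<bar> \<le> c * d" unfolding in_box_def by blast
  qed
  finally show "\<bar>matvec m A v i - matvec m A' v' i\<bar> \<le> e * B + c * d" .
qed

lemma foldr_matvec_in_box:
  assumes "\<And>j. j \<in> {1..<k} \<Longrightarrow> row_sum_le (A j) (c j) \<and> 0 \<le> c j"
  shows "in_box B v \<Longrightarrow> 0 \<le> B \<Longrightarrow> in_box (B * (\<Prod>j\<in>{1..<k}. c j)) (foldr (\<lambda>j w. matvec m (A j) w) [1..<k] v)"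
  using assms
proof (induction k arbitrary: v B)
  case 0 then show ?case by simp
next
  case (Suc k)
  show ?case
  proof (cases "k = 0")
    case True then show ?thesis using Suc.prems by simp
  next
    case False
    have ck: "row_sum_le (A k) (c k)" "0 \<le> c k" using Suc.prems(3)[of k] False by auto
    have "in_box (c k * B) (matvec m (A k) v)" using matvec_in_box[OF ck(1) Suc.prems(1,2)] .
    then have "in_box (c k * B * (\<Prod>j\<in>{1..<k}. c j)) (foldr (\<lambda>j w. matvec m (A j) w) [1..<k] (matvec
        m (A k) v))"
      using Suc.IH[of "c k * B" "matvec m (A k) v"] Suc.prems ck by auto
    moreover have "[1..<Suc k] = [1..<k] @ [k]" using False by simp
    moreover have "(\<Prod>j\<in>{1..<Suc k}. c j) = (\<Prod>j\<in>{1..<k}. c j) * c k" using False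
      by (simp add: prod.atLeastLessThan_Suc)
    ultimately show ?thesis by (simp add: algebra_simps)
  qed
qed

lemma foldr_matvec_near:
  assumes Lb: "1 \<le> Lb" and e: "0 \<le> e"
    and A: "\<And>j. j \<in> {1..<k} \<Longrightarrow> row_sum_le (A j) Lb \<and> row_sum_le (A' j) Lb
        \<and> row_sum_le (\<lambda>i l. A j i l - A' j i l) e"
  shows "in_box B v \<Longrightarrow> 0 \<le> B \<Longrightarrow> near d v v' \<Longrightarrow>
    near (Lb ^ k * (d + real k * e * B)) (foldr (\<lambda>j w. matvec m (A j) w) [1..<k] v) (foldr (\<lambda>j w.
      matvec m (A' j) w) [1..<k] v')"
  using A
proof (induction k arbitrary: v v' d B)
  case 0
  then show ?case using near_nonneg[OF 0(3)] by (auto intro: near_mono)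
next
  case (Suc k)
  have d0: "0 \<le> d" using near_nonneg[OF Suc.prems(3)] .
  show ?case
  proof (cases "k = 0")
    case True
    have "d \<le> Lb * (d + e * B)" using Lb d0 e Suc.prems(2)
      by (smt (verit, best) mult_le_cancel_right1 mult_nonneg_nonneg)
    then show ?thesis using True Suc.prems by (auto intro: near_mono)
  next
    case False
    have Ak: "row_sum_le (A k) Lb" "row_sum_le (A' k) Lb" "row_sum_le (\<lambda>i l. A k i l - A' k i l) e"
      using Suc.prems(4)[of k] False by auto
    have n1: "near (e * B + Lb * d) (matvec m (A k) v) (matvec m (A' k) v')"
      by (rule matvec_near[OF Ak(2) Ak(3) Suc.prems(1,2,3)])
    have b1: "in_box (Lb * B) (matvec m (A k) v)" by (rule matvec_in_box[OF Ak(1) Suc.prems(1,2)])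
    have LB: "0 \<le> Lb * B" using Lb Suc.prems(2) by simp
    have IH: "near (Lb ^ k * ((e * B + Lb * d) + real k * e * (Lb * B)))
       (foldr (\<lambda>j w. matvec m (A j) w) [1..<k] (matvec m (A k) v)) (foldr (\<lambda>j w. matvec m (A' j) w)
         [1..<k] (matvec m (A' k) v'))"
      using Suc.IH[OF b1 LB n1] Suc.prems(4) by auto
    have ul: "[1..<Suc k] = [1..<k] @ [k]" using False by simp
    have "Lb ^ k * ((e * B + Lb * d) + real k * e * (Lb * B)) \<le> Lb ^ Suc k * (d + real (Suc k) * e * B)"
    proof -
      have "e * B \<le> Lb * (e * B)" using mult_right_mono[OF Lb mult_nonneg_nonneg[OF e
        Suc.prems(2)]] by simp
      then have "(e * B + Lb * d) + real k * e * (Lb * B) \<le> Lb * (d + real (Suc k) * e * B)"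
        by (simp add: algebra_simps)
      then show ?thesis using Lb by (simp add: mult_left_mono)
    qed
    then show ?thesis using IH unfolding ul by (simp add: near_mono)
  qed
qed


lemma dP_upd_lipschitz:
  assumes R: "0 \<le> R" and K: "0 \<le> K"
  shows "\<exists>L\<ge>0. \<forall>i\<in>{3..m}. \<forall>j\<in>{2..m}. \<forall>s\<in>{0..R}. \<forall>w w' d. in_box K w \<longrightarrow> in_box K w' \<longrightarrow> near d w w' \<longrightarrow>
     \<bar>dP i j (w(2 := s))\<bar> \<le> L \<and> \<bar>dP i j (w(2 := s)) - dP i j (w'(2 := s))\<bar> \<le> L * d"
proof -
  obtain L where L: "0 \<le> L" "\<forall>p\<in>{3..m}\<times>{2..m}. box_lipschitz {2..m} (max R K) L L (dP (fst p) (snd p))"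
    using ex_uniform_box_lipschitz[of "{3..m}\<times>{2..m}" "\<lambda>p. dP (fst p) (snd p)" "max R K"]
      dP_polyfun by auto
  have "\<bar>dP i j (w(2 := s))\<bar> \<le> L \<and> \<bar>dP i j (w(2 := s)) - dP i j (w'(2 := s))\<bar> \<le> L * d"
    if ij: "i \<in> {3..m}" "j \<in> {2..m}" and s: "s \<in> {0..R}" and w: "in_box K w" "in_box K w'"
      and d: "near d w w'" for i j s w w' d
  proof -
    have "box_lipschitz {2..m} (max R K) L L (dP i j)" using L(2) ij by auto
    moreover have "in_box (max R K) w" "in_box (max R K) w'" "\<bar>s\<bar> \<le> max R K"
      using w s by (auto intro: in_box_mono)
    ultimately show ?thesis using box_lipschitzD in_box_upd near_upd[OF d] by blast
  qed
  then show ?thesis using L(1) by blast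
qed

lemma row_sum_le_of_entries:
  assumes "\<And>i j. i \<in> {3..m} \<Longrightarrow> j \<in> {3..m} \<Longrightarrow> \<bar>A i j\<bar> \<le> c" "real (card {3..m}) * c \<le> c'"
  shows "row_sum_le A c'"
  unfolding row_sum_le_def
proof
  fix i assume "i \<in> {3..m}"
  then have "(\<Sum>j\<in>{3..m}. \<bar>A i j\<bar>) \<le> (\<Sum>j\<in>{3..m}. c)" using assms(1) by (intro sum_mono)
  then show "(\<Sum>j\<in>{3..m}. \<bar>A i j\<bar>) \<le> c'" using assms(2) by simp
qed

lemma DP_d1P_lipschitz:
  assumes R: "0 \<le> R" and K: "0 \<le> K"
  shows "\<exists>L\<ge>0. \<forall>s\<in>{0..R}. \<forall>w w' d. in_box K w \<longrightarrow> in_box K w' \<longrightarrow> near d w w' \<longrightarrow>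
     row_sum_le (DP b m s w) L \<and> row_sum_le (\<lambda>i j. DP b m s w i j - DP b m s w' i j) (L * d) \<and>
     in_box L (d1P b m s w) \<and> near (L * d) (d1P b m s w) (d1P b m s w')"
proof -
  obtain L where L: "L \<ge> 0" "\<forall>i\<in>{3..m}. \<forall>j\<in>{2..m}. \<forall>s\<in>{0..R}. \<forall>w w' d.
      in_box K w \<longrightarrow> in_box K w' \<longrightarrow> near d w w' \<longrightarrow>
      \<bar>dP i j (w(2 := s))\<bar> \<le> L \<and> \<bar>dP i j (w(2 := s)) - dP i j (w'(2 := s))\<bar> \<le> L * d"
    using dP_upd_lipschitz[OF R K] by blast
  define L' where "L' = (real (card {3..m}) + 1) * L"
  have L': "real (card {3..m}) * L \<le> L'" "L \<le> L'" "0 \<le> L'"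
    unfolding L'_def using L(1) by (simp_all add: distrib_right)
  have "row_sum_le (DP b m s w) L' \<and> row_sum_le (\<lambda>i j. DP b m s w i j - DP b m s w' i j) (L' * d) \<and>
     in_box L' (d1P b m s w) \<and> near (L' * d) (d1P b m s w) (d1P b m s w')"
    if s: "s \<in> {0..R}" and w: "in_box K w" "in_box K w'" and d: "near d w w'" for s w w' d
  proof (intro conjI)
    have d0: "0 \<le> d" using near_nonneg[OF d] .
    have bound: "\<bar>dP i j (w(2 := s))\<bar> \<le> L" "\<bar>dP i j (w(2 := s)) - dP i j (w'(2 := s))\<bar> \<le> L * d"
      if "i \<in> {3..m}" "j \<in> {2..m}" for i j
      using L(2) that s w d by blast+
    show "row_sum_le (DP b m s w) L'"
      using bound(1) L'(1) by (intro row_sum_le_of_entries[where c = L]) (auto simp: DP_eq)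
    show "row_sum_le (\<lambda>i j. DP b m s w i j - DP b m s w' i j) (L' * d)"
      using bound(2) mult_right_mono[OF L'(1) d0]
      by (intro row_sum_le_of_entries[where c = "L * d"]) (auto simp: DP_eq mult.assoc)
    show "in_box L' (d1P b m s w)"
      unfolding in_box_def using bound(1)[of _ 2] L'(2) m_ge_3 by (force simp: d1P_eq)
    show "near (L' * d) (d1P b m s w) (d1P b m s w')"
      unfolding near_def using bound(2)[of _ 2] mult_right_mono[OF L'(2) d0] m_ge_3
      by (force simp: d1P_eq)
  qed
  then show ?thesis using L'(3) by (intro exI[of _ L']) auto
qed

lemma Minv_in_Icc: "x \<in> {0..R} \<Longrightarrow> Minv j x \<in> {0..R}"
  using Minv_nonneg[of x j] Minv_le[of x j] by auto

definition admissible_orbit :: "real \<Rightarrow> real \<Rightarrow> (nat \<Rightarrow> nat \<Rightarrow> real) \<Rightarrow> bool" where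
  "admissible_orbit K x W \<longleftrightarrow> (\<forall>j\<ge>1. in_box K (W j)) \<and> (\<forall>j\<ge>1. Minv j x \<le> delta \<longrightarrow> in_box eps (W j))"

text \<open>The first \<open>N\<^sub>1\<close> Jacobians (before \<open>M\<^sub>b\<^sup>-\<^sup>j(x) \<le> \<delta>\<close>) are only bounded, all later ones
  have row sums \<open>\<le> 3/4\<close>: hence geometric decay with a constant uniform in \<open>x \<in> [0,R]\<close>.\<close>
lemma chain_term_bound:
  assumes R: "0 \<le> R" and K: "0 \<le> K"
  shows "\<exists>Bd\<ge>0. \<forall>x\<in>{0..R}. \<forall>W. admissible_orbit K x W \<longrightarrow>
     (\<forall>k\<ge>1. \<forall>i\<in>{3..m}. \<bar>chain_term x W k i\<bar> \<le> Bd * (3/4) ^ k)"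
proof -
  obtain N1 where N1: "\<forall>n\<ge>N1. \<forall>x\<in>{0..R}. Minv n x \<le> delta"
    using Minv_uniformly_small[OF R delta_pos] by blast
  obtain L where L: "L \<ge> 0" "\<forall>s\<in>{0..R}. \<forall>w w' d. in_box K w \<longrightarrow> in_box K w' \<longrightarrow> near d w w' \<longrightarrow>
     row_sum_le (DP b m s w) L \<and> row_sum_le (\<lambda>i j. DP b m s w i j - DP b m s w' i j) (L * d) \<and>
     in_box L (d1P b m s w) \<and> near (L * d) (d1P b m s w) (d1P b m s w')"
    using DP_d1P_lipschitz[OF R K] by blast
  have LL: "row_sum_le (DP b m s w) L \<and> in_box L (d1P b m s w)" if "s \<in> {0..R}" "in_box K w" for s w
    using L(2) that near_refl by blast
  define Lb where "Lb = max L 1"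
  define Bd where "Bd = L * (Lb / (3/4)) ^ N1 / (3/4)"
  have Bd0: "0 \<le> Bd" unfolding Bd_def Lb_def using L by auto
  have "\<bar>chain_term x W k i\<bar> \<le> Bd * (3/4) ^ k"
    if x: "x \<in> {0..R}" and W: "admissible_orbit K x W" and k: "k \<ge> 1" and i: "i \<in> {3..m}" for x W k i
  proof -
    have W1: "\<forall>j\<ge>1. in_box K (W j)" and W2: "\<forall>j\<ge>1. Minv j x \<le> delta \<longrightarrow> in_box eps (W j)"
      using W unfolding admissible_orbit_def by auto
    define c where "c j = (if j < N1 then Lb else (3/4))" for j
    have rc: "row_sum_le (DP b m (Minv j x) (W j)) (c j) \<and> 0 \<le> c j" if j: "j \<in> {1..<k}" for j
    proof (cases "j < N1")
      case True
      have "row_sum_le (DP b m (Minv j x) (W j)) L" using LL[OF Minv_in_Icc[OF x]] W1 j by auto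
      then show ?thesis using True unfolding c_def Lb_def row_sum_le_def by (auto intro: order_trans)
    next
      case False
      have "Minv j x \<le> delta" "0 \<le> Minv j x" using N1 False x Minv_nonneg by auto
      moreover have "in_box eps (W j)" using W2 j \<open>Minv j x \<le> delta\<close> by auto
      ultimately have "row_sum_le (DP b m (Minv j x) (W j)) (3/4)" unfolding row_sum_le_def
        using DP_row_sum_le[OF abs_le_eps_if_le_delta] by auto
      then show ?thesis using False unfolding c_def by simp
    qed
    have v: "in_box L (d1P b m (Minv k x) (W k))" using LL[OF Minv_in_Icc[OF x]] W1 k by auto
    have fb: "in_box (L * (\<Prod>j\<in>{1..<k}. c j)) (foldr (\<lambda>j w. matvec m (DP b m (Minv j x) (W j)) w)
        [1..<k] (d1P b m (Minv k x) (W k)))"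
      using foldr_matvec_in_box[of k "\<lambda>j. DP b m (Minv j x) (W j)" c] rc v L(1) by blast
    have pc: "(\<Prod>j\<in>{1..<k}. c j) \<le> (Lb / (3/4)) ^ N1 * (3/4) ^ (k - 1)"
      by (rule prod_le_eventually_contracting) (auto simp: c_def Lb_def)
    have dT: "\<bar>deriv (Minv k) x\<bar> \<le> 1" using x Minv_deriv_bounds[of x k] by (simp add: deriv_Minv)
    have "\<bar>chain_term x W k i\<bar> = \<bar>foldr (\<lambda>j w. matvec m (DP b m (Minv j x) (W j)) w) [1..<k]
        (d1P b m (Minv k x) (W k)) i\<bar> * \<bar>deriv (Minv k) x\<bar>"
      unfolding chain_term_def by (simp add: abs_mult)
    also have "\<dots> \<le> (L * (\<Prod>j\<in>{1..<k}. c j)) * 1"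
      using fb i dT unfolding in_box_def by (intro mult_mono) auto
    also have "\<dots> \<le> L * ((Lb / (3/4)) ^ N1 * (3/4) ^ (k - 1))" using pc L(1) by (simp add: mult_left_mono)
    also have "\<dots> = Bd * (3/4) ^ k"
    proof -
      have "(3/4::real) ^ k = (3/4) ^ (k - 1) * (3/4)" using k by (cases k) auto
      then show ?thesis unfolding Bd_def by simp
    qed
    finally show ?thesis .
  qed
  then show ?thesis using Bd0 by blast
qed

lemma chain_term_lipschitz:
  assumes R: "0 \<le> R" and K: "0 \<le> K"
  shows "\<exists>\<Lambda>. \<forall>k. 0 \<le> \<Lambda> k \<and> (\<forall>x\<in>{0..R}. \<forall>W W' d. 1 \<le> k \<longrightarrow>
      (\<forall>j\<in>{1..k}. in_box K (W j) \<and> in_box K (W' j) \<and> near d (W j) (W' j)) \<longrightarrow>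
      (\<forall>i\<in>{3..m}. \<bar>chain_term x W k i - chain_term x W' k i\<bar> \<le> \<Lambda> k * d))"
proof -
  obtain L where L: "L \<ge> 0" "\<forall>s\<in>{0..R}. \<forall>w w' d. in_box K w \<longrightarrow> in_box K w' \<longrightarrow> near d w w' \<longrightarrow>
     row_sum_le (DP b m s w) L \<and> row_sum_le (\<lambda>i j. DP b m s w i j - DP b m s w' i j) (L * d) \<and>
     in_box L (d1P b m s w) \<and> near (L * d) (d1P b m s w) (d1P b m s w')"
    using DP_d1P_lipschitz[OF R K] by blast
  define Lb where "Lb = max L 1"
  define \<Lambda> where "\<Lambda> k = Lb ^ k * (L + real k * L * L)" for k
  have "\<bar>chain_term x W k i - chain_term x W' k i\<bar> \<le> \<Lambda> k * d"
    if x: "x \<in> {0..R}" and k: "1 \<le> k" and i: "i \<in> {3..m}"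
      and W: "\<forall>j\<in>{1..k}. in_box K (W j) \<and> in_box K (W' j) \<and> near d (W j) (W' j)" for x W W' d k i
  proof -
    define A where "A j = DP b m (Minv j x) (W j)" for j
    define A' where "A' j = DP b m (Minv j x) (W' j)" for j
    have d0: "0 \<le> d" using W k near_nonneg by fastforce
    have Lj: "row_sum_le (A j) Lb \<and> row_sum_le (A' j) Lb \<and> row_sum_le (\<lambda>i l. A j i l - A' j i l) (L * d)"
      if "j \<in> {1..<k}" for j
    proof -
      have "in_box K (W j)" "in_box K (W' j)" "near d (W j) (W' j)" using W that by auto
      then have "row_sum_le (A j) L" "row_sum_le (A' j) L" "row_sum_le (\<lambda>i l. A j i l - A' j i l) (L * d)"
        unfolding A_def A'_def using L(2) Minv_in_Icc[OF x] near_refl by blast+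
      then show ?thesis unfolding row_sum_le_def Lb_def by (auto intro: order_trans)
    qed
    have "in_box K (W k)" "in_box K (W' k)" "near d (W k) (W' k)" using W k by auto
    then have dk: "in_box L (d1P b m (Minv k x) (W k))"
      "near (L * d) (d1P b m (Minv k x) (W k)) (d1P b m (Minv k x) (W' k))"
      using L(2) Minv_in_Icc[OF x] by blast+
    have fd: "near (Lb ^ k * (L * d + real k * (L * d) * L))
        (foldr (\<lambda>j w. matvec m (A j) w) [1..<k] (d1P b m (Minv k x) (W k)))
        (foldr (\<lambda>j w. matvec m (A' j) w) [1..<k] (d1P b m (Minv k x) (W' k)))"
      by (rule foldr_matvec_near[of Lb "L * d" k A A']) (use Lj dk L(1) d0 in \<open>auto simp: Lb_def\<close>)
    have dT: "\<bar>deriv (Minv k) x\<bar> \<le> 1" using x Minv_deriv_bounds[of x k] by (simp add: deriv_Minv)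
    have "\<bar>chain_term x W k i - chain_term x W' k i\<bar>
        = \<bar>foldr (\<lambda>j w. matvec m (A j) w) [1..<k] (d1P b m (Minv k x) (W k)) i
           - foldr (\<lambda>j w. matvec m (A' j) w) [1..<k] (d1P b m (Minv k x) (W' k)) i\<bar>
          * \<bar>deriv (Minv k) x\<bar>"
      unfolding chain_term_def A_def A'_def by (simp add: abs_mult[symmetric] left_diff_distrib)
    also have "\<dots> \<le> Lb ^ k * (L * d + real k * (L * d) * L) * 1"
      using fd i dT unfolding near_def by (intro mult_mono) auto
    also have "\<dots> = \<Lambda> k * d" unfolding \<Lambda>_def by (simp add: algebra_simps)
    finally show ?thesis .
  qed
  moreover have "0 \<le> \<Lambda> k" for k unfolding \<Lambda>_def Lb_def using L(1) by auto
  ultimately show ?thesis by blast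
qed

definition dH :: "real \<Rightarrow> nat \<Rightarrow> real" where
  "dH x i = (\<Sum>k. series_term b m H (Suc k) x i)"

lemma uniform_box_bound:
  assumes R: "0 \<le> R"
  shows "\<exists>K\<ge>eps. (\<forall>x\<in>{0..R}. \<forall>n y. in_box eps y \<longrightarrow> in_box K (Fcomp b m x n y))
      \<and> (\<forall>x\<in>{0..R}. in_box K (H x))"
proof -
  obtain K1 where K1: "\<forall>x\<in>{0..R}. \<forall>n y. in_box eps y \<longrightarrow> in_box K1 (Fcomp b m x n y)"
    using Fcomp_bounded[OF R] by blast
  obtain K2 where K2: "\<forall>x\<in>{0..R}. in_box K2 (H x)" using H_bounded[OF R] by blast
  have "in_box (max eps (max K1 K2)) (Fcomp b m x n y)" if "x \<in> {0..R}" "in_box eps y" for x n y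
    using in_box_mono[OF K1[rule_format, OF that], of "max eps (max K1 K2)"] by simp
  moreover have "in_box (max eps (max K1 K2)) (H x)" if "x \<in> {0..R}" for x
    using in_box_mono[OF K2[rule_format, OF that], of "max eps (max K1 K2)"] by simp
  ultimately show ?thesis by (intro exI[of _ "max eps (max K1 K2)"]) auto
qed

lemma admissible_orbit_H:
  "x \<in> {0..R} \<Longrightarrow> \<forall>x\<in>{0..R}. in_box K (H x) \<Longrightarrow> admissible_orbit K x (\<lambda>j. H (Minv j x))"
  unfolding admissible_orbit_def using Minv_in_Icc H_in_box Minv_nonneg by auto

lemma admissible_orbit_Fcomp:
  "x \<in> {0..R} \<Longrightarrow> in_box eps y \<Longrightarrow> \<forall>x\<in>{0..R}. \<forall>n y. in_box eps y \<longrightarrow> in_box K (Fcomp b m x n y) \<Longrightarrow>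
    admissible_orbit K x (\<lambda>j. Fcomp b m (Minv j x) (n - j) y)"
  unfolding admissible_orbit_def using Minv_in_Icc Fcomp_in_box Minv_nonneg by auto

lemma series_term_bound:
  assumes R: "0 \<le> R"
  shows "\<exists>Bd\<ge>0. \<forall>x\<in>{0..R}. \<forall>i\<in>{3..m}. \<forall>k. \<bar>series_term b m H (Suc k) x i\<bar> \<le> Bd * (3/4) ^ (k + 1)"
proof -
  obtain K where K: "K \<ge> eps" "\<forall>x\<in>{0..R}. in_box K (H x)" using uniform_box_bound[OF R] by blast
  then obtain Bd where Bd: "Bd \<ge> 0" "\<forall>x\<in>{0..R}. \<forall>W. admissible_orbit K x W \<longrightarrow>
      (\<forall>k\<ge>1. \<forall>i\<in>{3..m}. \<bar>chain_term x W k i\<bar> \<le> Bd * (3/4) ^ k)"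
    using chain_term_bound[OF R, of K] eps_pos by auto
  have "\<bar>series_term b m H (Suc k) x i\<bar> \<le> Bd * (3/4) ^ (k + 1)"
    if x: "x \<in> {0..R}" and i: "i \<in> {3..m}" for x i k
  proof -
    have "\<bar>chain_term x (\<lambda>j. H (Minv j x)) (Suc k) i\<bar> \<le> Bd * (3/4) ^ Suc k"
      using Bd(2)[rule_format, OF x admissible_orbit_H[OF x K(2)], of "Suc k" i] i by simp
    then show ?thesis unfolding series_term_eq_chain_term by simp
  qed
  then show ?thesis using Bd(1) by blast
qed

lemma series_uniform_conv:
  "\<forall>R\<ge>0. \<forall>e>0. \<exists>N. \<forall>n\<ge>N. \<forall>x\<in>{0..R}. \<forall>i\<in>{3..m}. \<bar>(\<Sum>k=1..n. series_term b m H k x i) - dH x i\<bar> < e"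
proof (intro allI impI)
  fix R e :: real assume R: "0 \<le> R" and e: "0 < e"
  obtain Bd where Bd: "Bd \<ge> 0" "\<forall>x\<in>{0..R}. \<forall>i\<in>{3..m}. \<forall>k. \<bar>series_term b m H (Suc k) x i\<bar>
      \<le> Bd * (3/4) ^ (k + 1)"
    using series_term_bound[OF R] by blast
  obtain N where N: "\<forall>k\<ge>N. (8 * Bd * (3/4)) * (3/4) ^ k < e"
    using eventually_mult_power_less[of "8 * Bd * (3/4)" e "3/4"] Bd e by auto
  have "\<bar>(\<Sum>k=1..n. series_term b m H k x i) - dH x i\<bar> < e"
    if n: "n \<ge> N" and x: "x \<in> {0..R}" and i: "i \<in> {3..m}" for n x i
  proof -
    have "\<bar>(\<Sum>k<n. series_term b m H (Suc k) x i) - dH x i\<bar> \<le> real n * 0 + 8 * Bd * (3/4) ^ (n + 1)"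
      unfolding dH_def using Bd x i by (intro partial_sum_near_suminf) auto
    also have "\<dots> = (8 * Bd * (3/4)) * (3/4) ^ n" by simp
    also have "\<dots> < e" using N n by blast
    finally show ?thesis unfolding sum_atLeast1_atMost_shift .
  qed
  then show "\<exists>N. \<forall>n\<ge>N. \<forall>x\<in>{0..R}. \<forall>i\<in>{3..m}. \<bar>(\<Sum>k=1..n. series_term b m H k x i) - dH x i\<bar> < e"
    by blast
qed

section \<open>Differentiability of \<open>H\<close>\<close>

text \<open>Compare the two sums termwise: the first \<open>K\<^sub>0\<close> terms differ by a Lipschitz multiple of
  the distance between the tail compositions and \<open>H\<close>, which is geometrically small in \<open>n\<close>;
  the remaining terms of both are a geometric tail.\<close>
lemma dFcomp_uniform_conv:
  assumes R: "0 \<le> R" and e: "0 < e"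
  shows "\<exists>N. \<forall>n\<ge>N. \<forall>x\<in>{0..R}. \<forall>y. in_box eps y \<longrightarrow> (\<forall>i\<in>{3..m}. \<bar>dFcomp x n y i - dH x i\<bar> < e)"
proof -
  obtain K where K: "K \<ge> eps" "\<forall>x\<in>{0..R}. \<forall>n y. in_box eps y \<longrightarrow> in_box K (Fcomp b m x n y)"
    "\<forall>x\<in>{0..R}. in_box K (H x)"
    using uniform_box_bound[OF R] by blast
  have K_nonneg: "0 \<le> K" using K(1) eps_pos by simp
  obtain Bd where Bd: "Bd \<ge> 0" "\<forall>x\<in>{0..R}. \<forall>W. admissible_orbit K x W \<longrightarrow>
      (\<forall>k\<ge>1. \<forall>i\<in>{3..m}. \<bar>chain_term x W k i\<bar> \<le> Bd * (3/4) ^ k)"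
    using chain_term_bound[OF R K_nonneg] by blast
  obtain \<Lambda> where \<Lambda>: "\<forall>k. 0 \<le> \<Lambda> k \<and> (\<forall>x\<in>{0..R}. \<forall>W W' d. 1 \<le> k \<longrightarrow>
      (\<forall>j\<in>{1..k}. in_box K (W j) \<and> in_box K (W' j) \<and> near d (W j) (W' j)) \<longrightarrow>
      (\<forall>i\<in>{3..m}. \<bar>chain_term x W k i - chain_term x W' k i\<bar> \<le> \<Lambda> k * d))"
    using chain_term_lipschitz[OF R K_nonneg] by blast
  obtain N0 C where NC: "0 \<le> C"
    "\<forall>x\<in>{0..R}. \<forall>k w. in_box eps w \<longrightarrow> near (C * (3/4) ^ k) (Fcomp b m x (N0 + k) w) (H x)"
    using Fcomp_near_H[OF R] by blast
  obtain K0 where "\<forall>k\<ge>K0. (8 * Bd * (3/4)) * (3/4) ^ k < e / 2"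
    using eventually_mult_power_less[of "8 * Bd * (3/4)" "e / 2" "3/4"] Bd(1) e by auto
  then have tail: "8 * Bd * (3/4) ^ (K0 + 1) < e / 2" by simp
  define \<Lambda>s where "\<Lambda>s = (\<Sum>k\<le>K0. \<Lambda> k)"
  have \<Lambda>s: "\<Lambda> k \<le> \<Lambda>s" if "k \<le> K0" for k
    unfolding \<Lambda>s_def using that \<Lambda> by (intro member_le_sum) auto
  have \<Lambda>s_nonneg: "0 \<le> \<Lambda>s" unfolding \<Lambda>s_def using \<Lambda> by (intro sum_nonneg) auto
  obtain k1 where k1: "\<forall>k\<ge>k1. (real K0 * \<Lambda>s * C) * (3/4) ^ k < e / 2"
    using eventually_mult_power_less[of "real K0 * \<Lambda>s * C" "e / 2" "3/4"] \<Lambda>s_nonneg NC(1) e by auto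
  have "\<bar>dFcomp x n y i - dH x i\<bar> < e"
    if n: "n \<ge> K0 + N0 + k1" and x: "x \<in> {0..R}" and y: "in_box eps y" and i: "i \<in> {3..m}" for n x y i
  proof -
    define WH where "WH = (\<lambda>j. H (Minv j x))"
    define Wn where "Wn = (\<lambda>j. Fcomp b m (Minv j x) (n - j) y)"
    define dd where "dd = C * (3/4) ^ (n - K0 - N0)"
    have adm: "admissible_orbit K x WH" "admissible_orbit K x Wn"
      unfolding WH_def Wn_def using admissible_orbit_H[OF x K(3)] admissible_orbit_Fcomp[OF x y
        K(2)] by auto
    then have box: "in_box K (WH j)" "in_box K (Wn j)" if "1 \<le> j" for j
      using that unfolding admissible_orbit_def by auto
    have near_j: "near dd (Wn j) (WH j)" if j: "j \<in> {1..K0}" for j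
    proof -
      have "near (C * (3/4) ^ (n - j - N0)) (Fcomp b m (Minv j x) (N0 + (n - j - N0)) y) (H (Minv j x))"
        using NC(2) Minv_in_Icc[OF x] y by blast
      moreover have "N0 + (n - j - N0) = n - j" using n j by auto
      moreover have "C * (3/4) ^ (n - j - N0) \<le> dd"
        unfolding dd_def using NC(1) j by (intro mult_left_mono power_decreasing) auto
      ultimately show ?thesis unfolding Wn_def WH_def by (metis near_mono)
    qed
    have close: "\<bar>chain_term x Wn (Suc k) i - chain_term x WH (Suc k) i\<bar> \<le> \<Lambda>s * dd" if k: "k < K0" for k
    proof -
      have "\<bar>chain_term x Wn (Suc k) i - chain_term x WH (Suc k) i\<bar> \<le> \<Lambda> (Suc k) * dd"
        using \<Lambda> x i box near_j k by fastforce
      also have "\<dots> \<le> \<Lambda>s * dd" using \<Lambda>s[of "Suc k"] k NC(1) unfolding dd_def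
        by (intro mult_right_mono) auto
      finally show ?thesis .
    qed
    have eq_n: "dFcomp x n y i = (\<Sum>k<n. chain_term x Wn (Suc k) i)"
      unfolding dFcomp_def Wn_def by (rule sum_atLeast1_atMost_shift)
    have eq_H: "dH x i = (\<Sum>k. chain_term x WH (Suc k) i)"
      unfolding dH_def WH_def series_term_eq_chain_term ..
    have bound: "\<bar>chain_term x W (Suc k) i\<bar> \<le> Bd * (3/4) ^ (k + 1)" if "admissible_orbit K x W" for W k
      using Bd(2)[rule_format, OF x that, of "Suc k" i] i by simp
    have "\<bar>dFcomp x n y i - dH x i\<bar> \<le> real K0 * (\<Lambda>s * dd) + 8 * Bd * (3/4) ^ (K0 + 1)"
      unfolding eq_n eq_H using n by (intro partial_sum_near_suminf Bd(1) bound adm close) auto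
    also have "real K0 * (\<Lambda>s * dd) = (real K0 * \<Lambda>s * C) * (3/4) ^ (n - K0 - N0)"
      unfolding dd_def by simp
    finally have "\<bar>dFcomp x n y i - dH x i\<bar> \<le> real K0 * \<Lambda>s * C * (3/4) ^ (n - K0 - N0)
        + 8 * Bd * (3/4) ^ (K0 + 1)" .
    moreover have "real K0 * \<Lambda>s * C * (3/4) ^ (n - K0 - N0) < e / 2" using k1 n by simp
    ultimately show ?thesis using tail by linarith
  qed
  then show ?thesis by blast
qed

lemma Fcomp_deriv_uniform_conv:
  "\<forall>R\<ge>0. \<forall>e>0. \<exists>N. \<forall>n\<ge>N. \<forall>x\<in>{0..R}. \<forall>y. (\<forall>i\<in>{3..m}. \<bar>y i\<bar> \<le> eps) \<longrightarrow>
     (\<forall>i\<in>{3..m}. \<bar>deriv (\<lambda>t. Fcomp b m t n y i) x - dH x i\<bar> < e)"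
proof (intro allI impI)
  fix R e :: real assume "0 \<le> R" "0 < e"
  then obtain N where N: "\<forall>n\<ge>N. \<forall>x\<in>{0..R}. \<forall>y. in_box eps y \<longrightarrow> (\<forall>i\<in>{3..m}. \<bar>dFcomp x n y i - dH x i\<bar> < e)"
    using dFcomp_uniform_conv by blast
  show "\<exists>N. \<forall>n\<ge>N. \<forall>x\<in>{0..R}. \<forall>y. (\<forall>i\<in>{3..m}. \<bar>y i\<bar> \<le> eps) \<longrightarrow>
      (\<forall>i\<in>{3..m}. \<bar>deriv (\<lambda>t. Fcomp b m t n y i) x - dH x i\<bar> < e)"
  proof (intro exI[of _ N] allI impI ballI)
    fix n x y i assume "N \<le> n" "x \<in> {0..R}" "\<forall>i\<in>{3..m}. \<bar>y i\<bar> \<le> eps" "i \<in> {3..m}"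
    then show "\<bar>deriv (\<lambda>t. Fcomp b m t n y i) x - dH x i\<bar> < e"
      using N deriv_Fcomp[of x i n y] unfolding in_box_def by auto
  qed
qed

lemma eventually_dFcomp_near_dH:
  assumes R: "0 \<le> R" and e: "0 < e" and i: "i \<in> {3..m}"
  shows "\<forall>\<^sub>F n in sequentially. \<forall>t\<in>{0..R}. \<forall>h. norm (dFcomp t n (\<lambda>_. 0) i * h - dH t i * h) \<le> e * norm h"
proof -
  obtain N where N: "\<forall>n\<ge>N. \<forall>x\<in>{0..R}. \<forall>y. in_box eps y \<longrightarrow> (\<forall>i\<in>{3..m}. \<bar>dFcomp x n y i - dH x i\<bar> < e)"
    using dFcomp_uniform_conv[OF R e] by blast
  have "norm (dFcomp t n (\<lambda>_. 0) i * h - dH t i * h) \<le> e * norm h" if "n \<ge> N" "t \<in> {0..R}" for n t h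
  proof -
    have "in_box eps (\<lambda>_. 0)" using eps_pos by (intro in_box_zero) simp
    then have "\<bar>dFcomp t n (\<lambda>_. 0) i - dH t i\<bar> < e" using N that i by blast
    then have "\<bar>dFcomp t n (\<lambda>_. 0) i - dH t i\<bar> * \<bar>h\<bar> \<le> e * \<bar>h\<bar>" by (intro mult_right_mono) auto
    then show ?thesis by (simp add: abs_mult[symmetric] left_diff_distrib)
  qed
  then show ?thesis unfolding eventually_sequentially by blast
qed

lemma H_has_derivative:
  assumes x0: "0 \<le> x0" and i: "i \<in> {3..m}"
  shows "((\<lambda>t. H t i) has_real_derivative dH x0 i) (at x0 within {0..})"
proof -
  define S where "S = {0..x0 + 1}"
  have derf: "((\<lambda>t. Fcomp b m t n (\<lambda>_. 0) i) has_derivative (\<lambda>h. dFcomp t n (\<lambda>_. 0) i * h)) (at t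
      within S)"
    if t: "t \<in> S" for n t
  proof -
    have "((\<lambda>t. Fcomp b m t n (\<lambda>_. 0) i) has_real_derivative dFcomp t n (\<lambda>_. 0) i) (at t within S)"
      using t i unfolding S_def by (intro has_field_derivative_at_within[OF DERIV_Fcomp]) auto
    then show ?thesis by (simp add: has_field_derivative_def mult.commute[of _ "dFcomp t n (\<lambda>_. 0) i"])
  qed
  have nle: "\<forall>\<^sub>F n in sequentially. \<forall>t\<in>S. \<forall>h. norm (dFcomp t n (\<lambda>_. 0) i * h - dH t i * h) \<le> e * norm h"
    if "e > 0" for e
    unfolding S_def by (rule eventually_dFcomp_near_dH) (use x0 i that in auto)
  have S0: "0 \<in> S" unfolding S_def using x0 by simp
  have lim0: "(\<lambda>n. Fcomp b m 0 n (\<lambda>_. 0) i) \<longlonglongrightarrow> H 0 i" using LIMSEQ_Fcomp_H[of 0 i] i by simp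
  obtain g where g: "\<forall>t\<in>S. (\<lambda>n. Fcomp b m t n (\<lambda>_. 0) i) \<longlonglongrightarrow> g t
      \<and> (g has_derivative (\<lambda>h. dH t i * h)) (at t within S)"
    using has_derivative_sequence[of S "\<lambda>n t. Fcomp b m t n (\<lambda>_. 0) i" "\<lambda>n t h. dFcomp t n (\<lambda>_. 0) i * h"
        "\<lambda>t h. dH t i * h", OF _ derf nle S0 lim0]
    unfolding S_def by (auto simp: convex_real_interval)
  have gH: "g t = H t i" if t: "t \<in> S" for t
    using g t LIMSEQ_Fcomp_H[of t i] i unfolding S_def by (auto intro: LIMSEQ_unique)
  have x0S: "x0 \<in> S" unfolding S_def using x0 by simp
  have "((\<lambda>t. H t i) has_derivative (\<lambda>h. dH x0 i * h)) (at x0 within S)"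
  proof (rule has_derivative_transform_within[where f = g, OF _ zero_less_one x0S])
    show "(g has_derivative (\<lambda>h. dH x0 i * h)) (at x0 within S)" using g x0S by blast
    show "\<And>x'. x' \<in> S \<Longrightarrow> dist x' x0 < 1 \<Longrightarrow> g x' = H x' i" using gH by blast
  qed
  moreover have "at x0 within S = at x0 within {0..}"
    by (rule at_within_nhd[of x0 "{..<x0 + 1}"]) (auto simp: S_def)
  ultimately show ?thesis by (simp add: has_field_derivative_def mult.commute[of _ "dH x0 i"])
qed

end

theorem lemma3p2:
  fixes b m :: nat
  assumes "b \<ge> 2" and "m \<ge> 3"
  shows "\<exists>\<epsilon>>0. \<exists>H :: real \<Rightarrow> nat \<Rightarrow> real. \<exists>H' :: real \<Rightarrow> nat \<Rightarrow> real.
    \<comment> \<open>(i) uniform convergence of F_1 o ... o F_n (y) to H(x), independent of y\<close>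
    (\<forall>R\<ge>0. \<forall>e>0. \<exists>N. \<forall>n\<ge>N. \<forall>x\<in>{0..R}. \<forall>y. (\<forall>i\<in>{3..m}. \<bar>y i\<bar> \<le> \<epsilon>) \<longrightarrow>
        (\<forall>i\<in>{3..m}. \<bar>Fcomp b m x n y i - H x i\<bar> < e)) \<and>
    \<comment> \<open>(ii)\<close>
    (\<forall>x\<ge>0. H x m \<ge> 0) \<and> mono_on {0..} (\<lambda>x. H x m) \<and> H 0 m = 0 \<and>
    filterlim (\<lambda>x. H x m) at_top at_top \<and>
    \<comment> \<open>(iii)\<close>
    (\<forall>x\<ge>0. \<forall>i\<in>{3..m}. H (Mb b x) i = Pvec b m x (H x) i) \<and>
    \<comment> \<open>(iv) differentiability, derivative H' given by the uniformly convergent series\<close>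
    (\<forall>x\<ge>0. \<forall>i\<in>{3..m}. ((\<lambda>t. H t i) has_real_derivative H' x i) (at x within {0..})) \<and>
    (\<forall>R\<ge>0. \<forall>e>0. \<exists>N. \<forall>n\<ge>N. \<forall>x\<in>{0..R}. \<forall>i\<in>{3..m}.
        \<bar>(\<Sum>k=1..n. series_term b m H k x i) - H' x i\<bar> < e) \<and>
    \<comment> \<open>(v) derivatives of the compositions converge uniformly to H'\<close>
    (\<forall>R\<ge>0. \<forall>e>0. \<exists>N. \<forall>n\<ge>N. \<forall>x\<in>{0..R}. \<forall>y. (\<forall>i\<in>{3..m}. \<bar>y i\<bar> \<le> \<epsilon>) \<longrightarrow>
        (\<forall>i\<in>{3..m}. \<bar>deriv (\<lambda>t. Fcomp b m t n y i) x - H' x i\<bar> < e))"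
proof -
  interpret moment_recursion b m using assms by unfold_locales
  have m: "m \<in> {3..m}" using assms by simp
  have nonneg: "\<forall>x\<ge>0. H x m \<ge> 0" using H_nonneg m by auto
  have mono: "mono_on {0..} (\<lambda>x. H x m)" by (rule mono_onI) (use H_mono m in auto)
  have rec: "\<forall>x\<ge>0. \<forall>i\<in>{3..m}. H (Mb b x) i = Pvec b m x (H x) i" using H_Mb by auto
  have deriv: "\<forall>x\<ge>0. \<forall>i\<in>{3..m}. ((\<lambda>t. H t i) has_real_derivative dH x i) (at x within {0..})"
    using H_has_derivative by auto
  show ?thesis
    by (intro exI[of _ eps] exI[of _ H] exI[of _ dH] conjI)
      (fact eps_pos Fcomp_uniform_conv nonneg mono H_0 H_at_top rec deriv series_uniform_conv
        Fcomp_deriv_uniform_conv)+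
qed

end
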